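(* Let $F:\mathcal{S}_n\to\mathbb{R}$ be quasiconcave, uniformly elliptic, of class $C^1$, with $F(0)=0$. Let $u\in C^3(\overline{B}_1)$ satisfy $F(D^2u)=0$ in $B_1\subset\mathbb{R}^n$. Then \[ \sup_{B_{1/2}}|Du|\leq C\,\mathrm{osc}_{B_1}u. \] If in addition $F\in C^2$ and $u\in C^4$, then \[ \sup_{B_{1/2}}|D^2u|\leq C\,\mathrm{osc}_{B_1}u. \] Here $C$ depends only on $n,\lambda,\Lambda$.
   Context: $\mathcal{S}_n$ is the space of real symmetric $n\times n$ matrices. $F$ is uniformly elliptic with constants $0<\lambda\le\Lambda$ if $\lambda\|N\|\leq F(M+N)-F(M)\leq\Lambda\|N\|$ for all $M,N\in\mathcal{S}_n$ with $N\geq0$, where $\|N\|=\sup_{|x|=1}|Nx|$. $F$ is quasiconcave if $F(\theta M_1+(1-\theta)M_2)\geq\min\{F(M_1),F(M_2)\}$ for all $M_1,M_2\in\mathcal{S}_n$, $\theta\in[0,1]$. $\mathrm{osc}_{B_1}u=\sup_{B_1}u-\inf_{B_1}u$. *)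

theory Defs
  imports "HOL-Analysis.Analysis"
begin

type_synonym 'n mat = "real^'n^'n"

definition Sym :: "('n::finite) mat set" where
  "Sym = {M. transpose M = M}"

definition opnorm :: "('n::finite) mat \<Rightarrow> real" where
  "opnorm N = onorm (\<lambda>x. N *v x)"

definition psd :: "('n::finite) mat \<Rightarrow> bool" where
  "psd N \<longleftrightarrow> (\<forall>x. 0 \<le> x \<bullet> (N *v x))"

definition unif_elliptic :: "real \<Rightarrow> real \<Rightarrow> (('n::finite) mat \<Rightarrow> real) \<Rightarrow> bool" where
  "unif_elliptic lam Lam F \<longleftrightarrow> 0 < lam \<and> lam \<le> Lam \<and>
     (\<forall>M\<in>Sym. \<forall>N\<in>Sym. psd N \<longrightarrow>
        lam * opnorm N \<le> F (M + N) - F M \<and> F (M + N) - F M \<le> Lam * opnorm N)"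

definition quasiconcave :: "(('n::finite) mat \<Rightarrow> real) \<Rightarrow> bool" where
  "quasiconcave F \<longleftrightarrow> (\<forall>M1\<in>Sym. \<forall>M2\<in>Sym. \<forall>\<theta>::real. 0 \<le> \<theta> \<and> \<theta> \<le> 1 \<longrightarrow>
      F (\<theta> *\<^sub>R M1 + (1 - \<theta>) *\<^sub>R M2) \<ge> min (F M1) (F M2))"

definition C1_Sym :: "(('n::finite) mat \<Rightarrow> real) \<Rightarrow> bool" where
  "C1_Sym F \<longleftrightarrow> (\<exists>F'. (\<forall>M\<in>Sym. (F has_derivative blinfun_apply (F' M)) (at M within Sym))
                      \<and> continuous_on Sym F')"

definition C2_Sym :: "(('n::finite) mat \<Rightarrow> real) \<Rightarrow> bool" where
  "C2_Sym F \<longleftrightarrow> (\<exists>F' F''. (\<forall>M\<in>Sym. (F has_derivative blinfun_apply (F' M)) (at M within Sym))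
                      \<and> (\<forall>M\<in>Sym. (F' has_derivative blinfun_apply (F'' M)) (at M within Sym))
                      \<and> continuous_on Sym F' \<and> continuous_on Sym F'')"

text \<open>u is of class C^k on S (derivatives up to order k exist within S and are continuous on S).
  D is the family of iterated partial derivatives: D (i # is) = partial_i (D is).\<close>
definition Ck_on :: "nat \<Rightarrow> (real^'n::finite) set \<Rightarrow> (real^'n \<Rightarrow> real) \<Rightarrow> bool" where
  "Ck_on k S u \<longleftrightarrow> (\<exists>D :: 'n list \<Rightarrow> real^'n \<Rightarrow> real.
      (\<forall>x\<in>S. D [] x = u x) \<and>
      (\<forall>is. length is < k \<longrightarrow> (\<forall>x\<in>S.
          (D is has_derivative (\<lambda>h. \<Sum>i\<in>UNIV. h $ i * D (i # is) x)) (at x within S))) \<and>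
      (\<forall>is. length is \<le> k \<longrightarrow> continuous_on S (D is)))"

definition pdiff :: "'n::finite \<Rightarrow> (real^'n \<Rightarrow> real) \<Rightarrow> real^'n \<Rightarrow> real" where
  "pdiff i u x = deriv (\<lambda>t. u (x + t *\<^sub>R axis i 1)) 0"

definition grad :: "(real^'n::finite \<Rightarrow> real) \<Rightarrow> real^'n \<Rightarrow> real^'n" where
  "grad u x = (\<chi> i. pdiff i u x)"

definition hess :: "(real^'n::finite \<Rightarrow> real) \<Rightarrow> real^'n \<Rightarrow> real^'n^'n" where
  "hess u x = (\<chi> i j. pdiff i (pdiff j u) x)"

definition osc :: "(real^'n::finite \<Rightarrow> real) \<Rightarrow> (real^'n) set \<Rightarrow> real" where
  "osc u S = (SUP x\<in>S. u x) - (INF x\<in>S. u x)"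

end

theory Submission
  imports Defs
begin

(* Bernstein's method.  Let L = DF(D^2 u) be the linearisation along the solution; uniform
   ellipticity makes L(N) comparable to ||N|| for N >= 0.  Differentiating F(D^2 u) = 0 once
   gives L(D^2 u_m) = 0.  Quasiconcavity and F(D^2 u) = 0 = F(0) give L(D^2 u) <= 0, and,
   after differentiating the equation twice, L(D^2 u_ee) >= 0.
   With the cutoff zeta = (1 - |x|^2)^2 and c = sup u, the function
   zeta |Du|^2 + B (u - c)^2,  B = 30 Lam/lam + 1,
   satisfies L(D^2 .) > 0 wherever Du <> 0, so it cannot have an interior maximum there and is
   bounded by B osc^2; this is the gradient bound.  Running the same argument on
   (zeta u_ee^+)^2 + A (zeta |Du|^2 + B (u - c)^2),  A = 216 Lam/lam + 1,
   bounds u_ee from above for every unit e, and ellipticity together with F(D^2 u) = F(0)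
   converts this one-sided bound into a bound on ||D^2 u||. *)

lemma bounded_linear_axis: "bounded_linear (axis i :: 'b::real_normed_vector \<Rightarrow> 'b^'i::finite)"
proof (rule bounded_linear_intro[where K=1])
  show "axis i (x + y) = axis i x + axis i y" for x y :: 'b by (auto simp: axis_def vec_eq_iff)
  show "axis i (r *\<^sub>R x) = r *\<^sub>R axis i x" for r and x :: 'b by (auto simp: axis_def vec_eq_iff)
  show "norm (axis i x) \<le> norm x * 1" for x
  proof -
    have "norm (axis i x) \<le> (\<Sum>j\<in>UNIV. norm (axis i x $ j))" unfolding norm_vec_def by (rule L2_set_le_sum) simp
    also have "\<dots> = norm x" by (simp add: axis_def if_distrib cong: if_cong)
    finally show ?thesis by simp
  qed
qed

lemma has_derivative_vec_lambda:
  fixes f :: "'a::real_normed_vector \<Rightarrow> 'i::finite \<Rightarrow> 'b::real_normed_vector"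
  assumes "\<And>i. ((\<lambda>x. f x i) has_derivative f' i) F"
  shows "((\<lambda>x. \<chi> i. f x i) has_derivative (\<lambda>h. \<chi> i. f' i h)) F"
proof -
  have sum_axis: "\<And>g. (\<chi> i. g i) = (\<Sum>i\<in>UNIV. axis i (g i :: 'b))"
    by (simp add: vec_eq_iff axis_def cong: if_cong)
  have "((\<lambda>x. \<Sum>i\<in>UNIV. axis i (f x i)) has_derivative (\<lambda>h. \<Sum>i\<in>UNIV. axis i (f' i h))) F"
    by (intro has_derivative_sum bounded_linear.has_derivative[OF bounded_linear_axis assms])
  then show ?thesis by (simp only: sum_axis)
qed

lemma DERIV_second_nonpos_at_local_max:
  fixes \<phi> \<phi>' :: "real \<Rightarrow> real"
  assumes "0 < \<delta>"
    and der: "\<And>t. \<bar>t\<bar> < \<delta> \<Longrightarrow> (\<phi> has_real_derivative \<phi>' t) (at t)"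
    and der2: "(\<phi>' has_real_derivative c) (at 0)"
    and max: "\<And>t. \<bar>t\<bar> < \<delta> \<Longrightarrow> \<phi> t \<le> \<phi> 0"
  shows "c \<le> 0"
proof (rule ccontr)
  assume "\<not> c \<le> 0"
  then have c: "0 < c" by simp
  have crit: "\<phi>' 0 = 0"
    by (rule DERIV_local_max[OF der[of 0] \<open>0 < \<delta>\<close>]) (use max \<open>0 < \<delta>\<close> in auto)
  obtain d where "d > 0" and inc: "\<And>h. h > 0 \<Longrightarrow> h < d \<Longrightarrow> \<phi>' 0 < \<phi>' (0 + h)"
    using DERIV_pos_inc_right[OF der2 c] by blast
  define h where "h = min d \<delta> / 2"
  have h: "0 < h" "h < d" "h < \<delta>" using \<open>d > 0\<close> \<open>0 < \<delta>\<close> by (auto simp: h_def)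
  obtain z where z: "0 < z" "z < h" and mvt: "\<phi> h - \<phi> 0 = (h - 0) * \<phi>' z"
    using MVT2[of 0 h \<phi> \<phi>'] h der by force
  have "\<phi>' z > 0" using inc[of z] z h crit by simp
  then have "0 < (h - 0) * \<phi>' z" using h by simp
  then have "\<phi> h > \<phi> 0" using mvt by linarith
  moreover have "\<phi> h \<le> \<phi> 0" using max h by simp
  ultimately show False by simp
qed

lemma DERIV_second_pos_imp_strict_local_min:
  fixes g g' :: "real \<Rightarrow> real"
  assumes der: "\<And>t. (g has_real_derivative g' t) (at t)"
    and der2: "(g' has_real_derivative c) (at 0)"
    and crit: "g' 0 = 0" and c: "0 < c"
  shows "\<exists>h>0. g h > g 0 \<and> g (-h) > g 0"
proof -
  obtain d1 where "d1 > 0" and inc: "\<And>h. h > 0 \<Longrightarrow> h < d1 \<Longrightarrow> g' 0 < g' (0 + h)"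
    using DERIV_pos_inc_right[OF der2 c] by blast
  obtain d2 where "d2 > 0" and dec: "\<And>h. h > 0 \<Longrightarrow> h < d2 \<Longrightarrow> g' (0 - h) < g' 0"
    using DERIV_pos_inc_left[OF der2 c] by blast
  define h where "h = min d1 d2 / 2"
  have h: "0 < h" "h < d1" "h < d2" using \<open>d1 > 0\<close> \<open>d2 > 0\<close> by (auto simp: h_def)
  obtain z where z: "0 < z" "z < h" and mvt1: "g h - g 0 = (h - 0) * g' z"
    using MVT2[of 0 h g g'] h der by force
  have "g' z > 0" using inc[of z] z h crit by simp
  then have "0 < (h - 0) * g' z" using h by simp
  then have right: "g h > g 0" using mvt1 by linarith
  obtain w where w: "-h < w" "w < 0" and mvt2: "g 0 - g (-h) = (0 - -h) * g' w"
    using MVT2[of "-h" 0 g g'] h der by force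
  have "g' w < 0" using dec[of "-w"] w h crit by simp
  then have "h * g' w < 0" using h by (simp add: mult_pos_neg)
  then have left: "g (-h) > g 0" using mvt2 by simp
  show ?thesis using right left h by blast
qed

lemma DERIV_ge_of_increments_ge:
  fixes \<phi> :: "real \<Rightarrow> real"
  assumes der: "(\<phi> has_real_derivative d) (at 0)"
    and incr: "\<And>h. h > 0 \<Longrightarrow> a * h \<le> \<phi> h - \<phi> 0"
  shows "a \<le> d"
proof (rule ccontr)
  assume "\<not> a \<le> d"
  then have neg: "d - a < 0" by simp
  have "((\<lambda>t. \<phi> t - a * t) has_real_derivative d - a) (at 0)"
    by (auto intro!: derivative_eq_intros der)
  from DERIV_neg_dec_right[OF this neg] obtain \<delta> where "\<delta> > 0"
    and dec: "\<And>h. h > 0 \<Longrightarrow> h < \<delta> \<Longrightarrow> \<phi> 0 - a * 0 > \<phi> (0 + h) - a * (0 + h)"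
    by blast
  have "\<phi> 0 > \<phi> (\<delta>/2) - a * (\<delta>/2)" using dec[of "\<delta>/2"] \<open>\<delta> > 0\<close> by simp
  with incr[of "\<delta>/2"] \<open>\<delta> > 0\<close> show False by simp
qed

lemma sum_axis_mult: "(\<Sum>i\<in>UNIV. axis a (1::real) $ i * c i) = c a"
proof -
  have "\<And>i. axis a (1::real) $ i * c i = (if a = i then c i else 0)" by (simp add: axis_def)
  then show ?thesis by simp
qed

lemma has_real_derivative_line_comp:
  fixes f :: "real^'n::finite \<Rightarrow> real"
  assumes "(f has_derivative (\<lambda>h. \<Sum>i\<in>UNIV. h$i * g i)) (at (c + s *\<^sub>R v))"
  shows "((\<lambda>s. f (c + s *\<^sub>R v)) has_real_derivative (\<Sum>i\<in>UNIV. v$i * g i)) (at s)"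
proof -
  have l: "((\<lambda>s. c + s *\<^sub>R v) has_derivative (\<lambda>t. t *\<^sub>R v)) (at s)"
    by (auto intro!: derivative_eq_intros)
  have "((\<lambda>s. f (c + s *\<^sub>R v)) has_derivative (\<lambda>t. \<Sum>i\<in>UNIV. (t *\<^sub>R v)$i * g i)) (at s)"
    by (rule has_derivative_compose[OF l assms])
  moreover have "(\<lambda>t. \<Sum>i\<in>UNIV. (t *\<^sub>R v)$i * g i) = (*) (\<Sum>i\<in>UNIV. v$i * g i)"
    by (rule ext) (simp add: sum_distrib_left mult_ac)
  ultimately show ?thesis by (simp add: has_field_derivative_def)
qed

lemma mean_value_along_line:
  fixes f :: "real^'n::finite \<Rightarrow> real"
  assumes df: "\<And>s. 0 \<le> s \<Longrightarrow> s \<le> t \<Longrightarrow>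
      (f has_derivative (\<lambda>h. \<Sum>i\<in>UNIV. h$i * g i (x + s *\<^sub>R v))) (at (x + s *\<^sub>R v))"
    and "0 < t"
  shows "\<exists>\<sigma>. 0 < \<sigma> \<and> \<sigma> < t \<and> f (x + t *\<^sub>R v) - f x = t * (\<Sum>i\<in>UNIV. v$i * g i (x + \<sigma> *\<^sub>R v))"
proof -
  have "\<And>s. 0 \<le> s \<Longrightarrow> s \<le> t \<Longrightarrow>
      ((\<lambda>s. f (x + s *\<^sub>R v)) has_real_derivative (\<Sum>i\<in>UNIV. v$i * g i (x + s *\<^sub>R v))) (at s)"
    by (rule has_real_derivative_line_comp) (rule df)
  from MVT2[OF \<open>0 < t\<close> this] show ?thesis by force
qed

lemma ball_subset_unit_cball:
  assumes "x1 \<in> ball (0::real^'n::finite) 1"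
  shows "0 < 1 - norm x1" "ball x1 (1 - norm x1) \<subseteq> cball 0 1"
proof -
  show "0 < 1 - norm x1" using assms by simp
  show "ball x1 (1 - norm x1) \<subseteq> cball 0 1"
  proof
    fix y assume "y \<in> ball x1 (1 - norm x1)"
    then have "norm (y - x1) < 1 - norm x1" by (simp add: dist_norm norm_minus_commute)
    moreover have "norm y \<le> norm x1 + norm (y - x1)" using norm_triangle_ineq[of x1 "y - x1"] by simp
    ultimately show "y \<in> cball 0 1" by simp
  qed
qed

lemma continuous_on_unit_cball_attains_max:
  fixes f :: "real^'n::finite \<Rightarrow> real"
  assumes "continuous_on (cball 0 1) f"
  obtains x1 where "x1 \<in> cball 0 1" "\<And>y. y \<in> cball 0 1 \<Longrightarrow> f y \<le> f x1"
proof -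
  have "cball (0::real^'n) 1 \<noteq> {}" by (metis centre_in_cball zero_less_one order_less_imp_le empty_iff)
  from continuous_attains_sup[OF compact_cball this assms] obtain x where "x \<in> cball 0 1" "\<forall>y\<in>cball 0 1. f y \<le> f x"
    by blast
  then show ?thesis using that by blast
qed

lemma SUP_INF_unit_ball_bounds:
  fixes u :: "real^'n::finite \<Rightarrow> real"
  assumes c: "continuous_on (cball 0 1) u" and x: "x \<in> cball 0 1"
  shows "u x \<le> (SUP y\<in>ball 0 1. u y)" "(INF y\<in>ball 0 1. u y) \<le> u x"
proof -
  have bd: "bounded (u ` cball 0 1)" by (rule compact_imp_bounded[OF compact_continuous_image[OF c compact_cball]])
  have bb: "bounded (u ` ball 0 1)" by (rule bounded_subset[OF bd]) (auto)
  have cl: "closure (ball (0::real^'n) 1) = cball 0 1" by simp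
  have c': "continuous_on (closure (ball 0 1)) u" using c cl by simp
  have x': "x \<in> closure (ball 0 1)" using x cl by simp
  show "u x \<le> (SUP y\<in>ball 0 1. u y)"
    by (rule continuous_le_on_closure[OF c' x']) (rule cSUP_upper[OF _ bounded_imp_bdd_above[OF bb]])
  show "(INF y\<in>ball 0 1. u y) \<le> u x"
    by (rule continuous_ge_on_closure[OF c' x']) (rule cINF_lower[OF bounded_imp_bdd_below[OF bb]])
qed

lemma osc_nonneg:
  fixes u :: "real^'n::finite \<Rightarrow> real"
  assumes c: "continuous_on (cball 0 1) u"
  shows "0 \<le> osc u (ball 0 1)"
  using SUP_INF_unit_ball_bounds[OF c, of 0] by (simp add: osc_def)

section \<open>Symmetric matrices and elliptic functionals\<close>

definition outer :: "real^'n::finite \<Rightarrow> real^'n \<Rightarrow> real^'n^'n" where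
  "outer a b = (\<chi> i j. a$i * b$j)"

definition symm :: "real^'n::finite^'n \<Rightarrow> real^'n^'n" where
  "symm H = (1/2) *\<^sub>R (H + transpose H)"

lemma outer_mult_vec: "outer a b *v h = (b \<bullet> h) *\<^sub>R a"
  by (simp add: outer_def matrix_vector_mult_def vec_eq_iff inner_vec_def sum_distrib_left algebra_simps)

lemma transpose_add: "transpose (A + B) = transpose A + (transpose B :: real^'n::finite^'n)"
  by (simp add: transpose_def vec_eq_iff)
lemma transpose_minus: "transpose (- A) = - (transpose A :: real^'n::finite^'n)"
  by (simp add: transpose_def vec_eq_iff)
lemma transpose_diff: "transpose (A - B) = transpose A - (transpose B :: real^'n::finite^'n)"
  by (simp add: transpose_def vec_eq_iff)
lemma transpose_outer: "transpose (outer a b) = outer b a"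
  by (simp add: transpose_def outer_def vec_eq_iff)

lemma Sym_add: "A \<in> Sym \<Longrightarrow> B \<in> Sym \<Longrightarrow> A + B \<in> Sym"
  by (simp add: Sym_def transpose_add)
lemma Sym_diff: "A \<in> Sym \<Longrightarrow> B \<in> Sym \<Longrightarrow> A - B \<in> Sym"
  by (simp add: Sym_def transpose_diff)
lemma Sym_minus: "A \<in> Sym \<Longrightarrow> - A \<in> Sym"
  by (simp add: Sym_def transpose_minus)
lemma Sym_scaleR: "A \<in> Sym \<Longrightarrow> c *\<^sub>R A \<in> Sym"
  by (simp add: Sym_def transpose_scalar)
lemma Sym_zero: "0 \<in> Sym"
  by (simp add: Sym_def transpose_def vec_eq_iff)
lemma Sym_mat: "mat c \<in> Sym"
  by (simp add: Sym_def)
lemma Sym_outer_self: "outer a a \<in> Sym"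
  by (simp add: Sym_def transpose_outer)
lemma Sym_symm: "symm H \<in> Sym"
  by (simp add: Sym_def symm_def transpose_scalar transpose_add add.commute)
lemma symm_Sym: "H \<in> Sym \<Longrightarrow> symm H = H"
  by (simp add: Sym_def symm_def scaleR_2[symmetric])
lemma Sym_iff_components: "H \<in> Sym \<longleftrightarrow> (\<forall>i j. H$i$j = H$j$i)"
  by (auto simp: Sym_def transpose_def vec_eq_iff)

lemma quadratic_form_symm: "x \<bullet> (symm H *v x) = x \<bullet> (H *v (x::real^'n::finite))"
proof -
  have "x \<bullet> (x v* H) = x \<bullet> (H *v x)"
    by (subst inner_commute) (rule dot_lmul_matrix)
  then show ?thesis
    by (simp add: symm_def matrix_vector_mult_add_rdistrib scaleR_matrix_vector_assoc[symmetric]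
        inner_add_right)
qed

lemma psd_outer_self: "psd (outer a a)"
  by (simp add: psd_def outer_mult_vec inner_commute)

lemma psd_scaleR: "psd N \<Longrightarrow> 0 \<le> c \<Longrightarrow> psd (c *\<^sub>R N)"
  by (simp add: psd_def scaleR_matrix_vector_assoc[symmetric])

lemma opnorm_nonneg: "0 \<le> opnorm N"
  by (simp add: opnorm_def onorm_pos_le)

lemma opnorm_le_bound: "(\<And>x. norm (N *v x) \<le> b * norm x) \<Longrightarrow> opnorm N \<le> b"
  unfolding opnorm_def by (rule onorm_le)

lemma norm_mult_vec_le_opnorm: "norm (N *v x) \<le> opnorm N * norm x"
  unfolding opnorm_def by (rule onorm) simp

lemma opnorm_outer_self: "opnorm (outer a a) = (norm a)^2"
proof (rule antisym)
  show "opnorm (outer a a) \<le> (norm a)^2"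
  proof (rule opnorm_le_bound)
    fix x
    have "\<bar>a \<bullet> x\<bar> * norm a \<le> (norm a * norm x) * norm a"
      by (rule mult_right_mono[OF Cauchy_Schwarz_ineq2 norm_ge_zero])
    then show "norm (outer a a *v x) \<le> (norm a)^2 * norm x"
      by (simp add: outer_mult_vec power2_eq_square mult_ac)
  qed
  have "norm a * (norm a)^2 \<le> opnorm (outer a a) * norm a"
    using norm_mult_vec_le_opnorm[of "outer a a" a]
    by (simp add: outer_mult_vec power2_norm_eq_inner[symmetric] power2_eq_square)
  then show "(norm a)^2 \<le> opnorm (outer a a)"
    by (cases "a = 0") (auto simp: power2_eq_square outer_def opnorm_nonneg)
qed

lemma opnorm_scaleR: "opnorm (c *\<^sub>R N) = \<bar>c\<bar> * opnorm N"
proof -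
  have "(\<lambda>x. (c *\<^sub>R N) *v x) = (\<lambda>x. c *\<^sub>R (N *v x))"
    by (rule ext) (simp add: scaleR_matrix_vector_assoc)
  then show ?thesis unfolding opnorm_def using onorm_scaleR[of "(*v) N" c] by simp
qed

lemma opnorm_mat1: "opnorm (mat 1 :: real^'n::finite^'n) = 1"
proof -
  have id: "(\<lambda>x. (mat 1 :: real^'n^'n) *v x) = (\<lambda>x. x)" by simp
  show ?thesis unfolding opnorm_def id by (rule onorm_id)
qed

lemma opnorm_triangle: "opnorm (A + B) \<le> opnorm A + opnorm B"
proof -
  have "(\<lambda>x. (A + B) *v x) = (\<lambda>x. A *v x + B *v x)"
    by (rule ext) (simp add: matrix_vector_mult_add_rdistrib)
  then show ?thesis unfolding opnorm_def using onorm_triangle[of "(*v) A" "(*v) B"] by simp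
qed

lemma symm_add: "symm (A + B) = symm A + symm B"
  by (simp add: symm_def transpose_add algebra_simps)
lemma symm_scaleR: "symm (c *\<^sub>R A) = c *\<^sub>R symm A"
  by (simp add: symm_def transpose_scalar algebra_simps)
lemma symm_zero: "symm 0 = 0"
  by (simp add: symm_def transpose_def vec_eq_iff)
lemma symm_sum: "symm (\<Sum>i\<in>I. f i) = (\<Sum>i\<in>I. symm (f i))"
  by (induction I rule: infinite_finite_induct) (auto simp: symm_zero symm_add)
lemma symm_outer_commute: "symm (outer a b) = symm (outer b a)"
  by (simp add: symm_def transpose_outer add.commute)

lemma outer_add_left: "outer (a + b) c = outer a c + outer b c"
  by (simp add: outer_def vec_eq_iff algebra_simps)
lemma outer_add_right: "outer a (b + c) = outer a b + outer a c"
  by (simp add: outer_def vec_eq_iff algebra_simps)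
lemma outer_scaleR_left: "outer (r *\<^sub>R a) b = r *\<^sub>R outer a b"
  by (simp add: outer_def vec_eq_iff algebra_simps)
lemma outer_scaleR_right: "outer a (r *\<^sub>R b) = r *\<^sub>R outer a b"
  by (simp add: outer_def vec_eq_iff algebra_simps)
lemma outer_zero_right: "outer a 0 = 0"
  by (simp add: outer_def vec_eq_iff)
lemma outer_sum_right: "outer a (\<Sum>i\<in>I. f i) = (\<Sum>i\<in>I. outer a (f i))"
  by (induction I rule: infinite_finite_induct) (auto simp: outer_add_right outer_zero_right)

definition elliptic_blinfun :: "real \<Rightarrow> real \<Rightarrow> (('n::finite) mat \<Rightarrow>\<^sub>L real) \<Rightarrow> bool" where
  "elliptic_blinfun lam Lam L \<longleftrightarrow>
     (\<forall>N\<in>Sym. psd N \<longrightarrow> lam * opnorm N \<le> blinfun_apply L N \<and> blinfun_apply L N \<le> Lam * opnorm N)"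

text \<open>The derivative of F is only taken within Sym, so a linearisation L is applied to the
  symmetric part of a matrix: apply_sym L (outer a b) stands for the sum over i, j of
  L_ij a_i b_j.\<close>
definition apply_sym :: "(('n::finite) mat \<Rightarrow>\<^sub>L real) \<Rightarrow> 'n mat \<Rightarrow> real" where
  "apply_sym L H = blinfun_apply L (symm H)"

lemma apply_sym_add: "apply_sym L (A + B) = apply_sym L A + apply_sym L B"
  by (simp add: apply_sym_def symm_add blinfun.bilinear_simps)
lemma apply_sym_scaleR: "apply_sym L (c *\<^sub>R A) = c * apply_sym L A"
  by (simp add: apply_sym_def symm_scaleR blinfun.bilinear_simps)
lemma apply_sym_sum: "apply_sym L (\<Sum>i\<in>I. f i) = (\<Sum>i\<in>I. apply_sym L (f i))"
  by (simp add: apply_sym_def symm_sum blinfun.bilinear_simps)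
lemma apply_sym_outer_commute: "apply_sym L (outer a b) = apply_sym L (outer b a)"
  by (simp add: apply_sym_def symm_outer_commute)
lemma apply_sym_Sym: "H \<in> Sym \<Longrightarrow> apply_sym L H = blinfun_apply L H"
  by (simp add: apply_sym_def symm_Sym)
lemma apply_sym_hess_product:
  "apply_sym L (f1 *\<^sub>R H2 + f2 *\<^sub>R H1 + outer g2 g1 + outer g1 g2) = f1 * apply_sym L H2 + f2 * apply_sym L H1 + 2 * apply_sym L (outer g1 g2)"
  by (simp add: apply_sym_add apply_sym_scaleR apply_sym_outer_commute[of L g2 g1])
lemma apply_sym_outer_scaleR: "apply_sym L (outer (a *\<^sub>R v) (b *\<^sub>R w)) = a * b * apply_sym L (outer v w)"
  by (simp add: outer_scaleR_left outer_scaleR_right apply_sym_scaleR)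
lemma apply_sym_outer_self_add: "apply_sym L (outer (a + b) (a + b)) = apply_sym L (outer a a) + 2 * apply_sym L (outer a b) + apply_sym L (outer b b)"
  by (simp add: outer_add_left outer_add_right apply_sym_add apply_sym_outer_commute[of L b a])

lemma apply_sym_outer_self_lower:
  assumes "elliptic_blinfun lam Lam L" shows "lam * (norm a)^2 \<le> apply_sym L (outer a a)"
proof -
  have "lam * opnorm (outer a a) \<le> blinfun_apply L (outer a a)"
    using assms psd_outer_self[of a] Sym_outer_self[of a] unfolding elliptic_blinfun_def by blast
  then show ?thesis by (simp add: apply_sym_Sym Sym_outer_self opnorm_outer_self)
qed

lemma apply_sym_outer_self_upper:
  assumes "elliptic_blinfun lam Lam L" shows "apply_sym L (outer a a) \<le> Lam * (norm a)^2"
proof -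
  have "blinfun_apply L (outer a a) \<le> Lam * opnorm (outer a a)"
    using assms psd_outer_self[of a] Sym_outer_self[of a] unfolding elliptic_blinfun_def by blast
  then show ?thesis by (simp add: apply_sym_Sym Sym_outer_self opnorm_outer_self)
qed

lemma apply_sym_outer_self_nonneg:
  assumes "elliptic_blinfun lam Lam L" "0 \<le> lam" shows "0 \<le> apply_sym L (outer a a)"
  using apply_sym_outer_self_lower[OF assms(1), of a] assms(2) by (meson order_trans zero_le_mult_iff zero_le_power2)

lemma apply_sym_outer_cross_lower:
  assumes "elliptic_blinfun lam Lam L" "0 \<le> lam"
  shows "- (apply_sym L (outer a a) + apply_sym L (outer b b)) \<le> 2 * apply_sym L (outer a b)"
proof -
  have "0 \<le> apply_sym L (outer (a + b) (a + b))" by (rule apply_sym_outer_self_nonneg[OF assms])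
  also have "\<dots> = apply_sym L (outer a a) + 2 * apply_sym L (outer a b) + apply_sym L (outer b b)"
    by (rule apply_sym_outer_self_add)
  finally show ?thesis by simp
qed

lemma apply_sym_nonpos:
  assumes "elliptic_blinfun lam Lam L" "0 \<le> lam" and nsd: "\<And>\<xi>. \<xi> \<bullet> (H *v \<xi>) \<le> 0"
  shows "apply_sym L H \<le> 0"
proof -
  have s: "- symm H \<in> Sym" by (rule Sym_minus[OF Sym_symm])
  have mv: "(- symm H) *v x = - (symm H *v x)" for x
    by (simp add: matrix_vector_mult_def vec_eq_iff sum_negf)
  have p: "psd (- symm H)"
    unfolding psd_def using nsd by (simp add: quadratic_form_symm mv)
  have "lam * opnorm (- symm H) \<le> blinfun_apply L (- symm H)"
    using assms(1) s p unfolding elliptic_blinfun_def by blast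
  moreover have "blinfun_apply L (- symm H) = - apply_sym L H"
    by (simp add: apply_sym_def blinfun.bilinear_simps)
  moreover have "0 \<le> lam * opnorm (- symm H)" by (rule mult_nonneg_nonneg[OF assms(2) opnorm_nonneg])
  ultimately show ?thesis by simp
qed

lemma apply_sym_id_upper:
  assumes "elliptic_blinfun lam Lam L" shows "apply_sym L (mat 1) \<le> Lam"
proof -
  have "psd (mat 1 :: 'a mat)" by (simp add: psd_def inner_ge_zero)
  then have "blinfun_apply L (mat 1) \<le> Lam * opnorm (mat 1 :: 'a mat)"
    using assms Sym_mat[of 1] unfolding elliptic_blinfun_def by blast
  then show ?thesis by (simp add: apply_sym_Sym Sym_mat opnorm_mat1)
qed

lemma apply_sym_id_lower:
  assumes "elliptic_blinfun lam Lam L" shows "lam \<le> apply_sym L (mat 1)"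
proof -
  have "psd (mat 1 :: 'a mat)" by (simp add: psd_def inner_ge_zero)
  then have "lam * opnorm (mat 1 :: 'a mat) \<le> blinfun_apply L (mat 1)"
    using assms Sym_mat[of 1] unfolding elliptic_blinfun_def by blast
  then show ?thesis by (simp add: apply_sym_Sym Sym_mat opnorm_mat1)
qed

section \<open>Uniformly elliptic quasiconcave operators\<close>

lemma has_real_derivative_along_line:
  fixes F :: "('n::finite) mat \<Rightarrow> real"
  assumes D: "\<forall>M\<in>Sym. (F has_derivative blinfun_apply (F' M)) (at M within Sym)"
    and M: "M \<in> Sym" and X: "X \<in> Sym"
  shows "((\<lambda>t. F (M + t *\<^sub>R X)) has_real_derivative blinfun_apply (F' (M + t *\<^sub>R X)) X) (at t)"
proof -
  have sub: "(\<lambda>t. M + t *\<^sub>R X) ` UNIV \<subseteq> Sym" using M X by (auto intro: Sym_add Sym_scaleR)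
  have line: "((\<lambda>t. M + t *\<^sub>R X) has_derivative (\<lambda>s. s *\<^sub>R X)) (at t within UNIV)"
    by (auto intro!: derivative_eq_intros)
  have "((\<lambda>t. F (M + t *\<^sub>R X)) has_derivative (\<lambda>s. blinfun_apply (F' (M + t *\<^sub>R X)) (s *\<^sub>R X))) (at t within UNIV)"
    by (rule has_derivative_in_compose2[OF _ sub _ line]) (use D in auto)
  moreover have "(\<lambda>s. blinfun_apply (F' (M + t *\<^sub>R X)) (s *\<^sub>R X)) = (*) (blinfun_apply (F' (M + t *\<^sub>R X)) X)"
    by (rule ext) (simp add: blinfun.scaleR_right)
  ultimately show ?thesis by (simp add: has_field_derivative_def)
qed

lemma unif_elliptic_derivative:
  fixes F :: "('n::finite) mat \<Rightarrow> real"
  assumes ue: "unif_elliptic lam Lam F"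
    and D: "\<forall>M\<in>Sym. (F has_derivative blinfun_apply (F' M)) (at M within Sym)"
    and M: "M \<in> Sym"
  shows "elliptic_blinfun lam Lam (F' M)"
  unfolding elliptic_blinfun_def
proof (intro ballI impI conjI)
  fix N :: "'n mat" assume N: "N \<in> Sym" "psd N"
  have incr: "lam * opnorm N * h \<le> F (M + h *\<^sub>R N) - F M \<and> F (M + h *\<^sub>R N) - F M \<le> Lam * opnorm N * h"
    if "h > 0" for h
  proof -
    have "h *\<^sub>R N \<in> Sym" "psd (h *\<^sub>R N)" using N that by (auto intro: Sym_scaleR psd_scaleR)
    then have "lam * opnorm (h *\<^sub>R N) \<le> F (M + h *\<^sub>R N) - F M \<and> F (M + h *\<^sub>R N) - F M \<le> Lam * opnorm (h *\<^sub>R N)"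
      using ue M unfolding unif_elliptic_def by blast
    then show ?thesis using that by (simp add: opnorm_scaleR mult_ac)
  qed
  have der: "((\<lambda>t. F (M + t *\<^sub>R N)) has_real_derivative blinfun_apply (F' M) N) (at 0)"
    using has_real_derivative_along_line[OF D M N(1), of 0] by simp
  show "lam * opnorm N \<le> blinfun_apply (F' M) N"
    by (rule DERIV_ge_of_increments_ge[OF der]) (use incr in auto)
  have "- (Lam * opnorm N) \<le> - blinfun_apply (F' M) N"
    by (rule DERIV_ge_of_increments_ge[OF DERIV_minus[OF der]]) (use incr in force)
  then show "blinfun_apply (F' M) N \<le> Lam * opnorm N" by simp
qed

lemma opnorm_le_of_quadratic_form_le:
  fixes F :: "('n::finite) mat \<Rightarrow> real"
  assumes ue: "unif_elliptic lam Lam F" and F0: "F 0 = 0" and M: "M \<in> Sym" and FM: "F M = 0"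
    and mu: "0 \<le> \<mu>" and up: "\<And>\<xi>. \<xi> \<bullet> (M *v \<xi>) \<le> \<mu> * (\<xi> \<bullet> \<xi>)"
  shows "opnorm M \<le> (1 + Lam / lam) * \<mu>"
proof -
  have lam: "0 < lam" "lam \<le> Lam" using ue by (auto simp: unif_elliptic_def)
  define N where "N = \<mu> *\<^sub>R mat 1 - M"
  have NS: "N \<in> Sym" unfolding N_def by (intro Sym_diff Sym_scaleR Sym_mat M)
  have mv: "(\<mu> *\<^sub>R mat 1) *v \<xi> = \<mu> *\<^sub>R \<xi>" for \<xi> :: "real^'n"
    by (simp only: scaleR_matrix_vector_assoc[symmetric] matrix_vector_mul_lid)
  have Np: "psd N" unfolding psd_def N_def
  proof
    fix \<xi> :: "real^'n"
    show "0 \<le> \<xi> \<bullet> ((\<mu> *\<^sub>R mat 1 - M) *v \<xi>)"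
      using up[of \<xi>] by (simp add: matrix_vector_mult_diff_rdistrib mv inner_diff_right)
  qed
  have Ip: "psd (\<mu> *\<^sub>R mat 1 :: 'n mat)" unfolding psd_def by (simp add: mv mu)
  have IS: "\<mu> *\<^sub>R mat 1 \<in> (Sym :: 'n mat set)" by (intro Sym_scaleR Sym_mat)
  have e1: "lam * opnorm N \<le> F (M + N) - F M" using ue M NS Np unfolding unif_elliptic_def by blast
  have e2: "F (0 + \<mu> *\<^sub>R mat 1) - F 0 \<le> Lam * opnorm (\<mu> *\<^sub>R mat 1 :: 'n mat)"
    using ue Sym_zero IS Ip unfolding unif_elliptic_def by blast
  have oI: "opnorm (\<mu> *\<^sub>R mat 1 :: 'n mat) = \<mu>" using mu by (simp add: opnorm_scaleR opnorm_mat1)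
  have MN: "M + N = \<mu> *\<^sub>R mat 1" by (simp add: N_def)
  have "lam * opnorm N \<le> Lam * \<mu>" using e1 e2 FM F0 oI MN by simp
  then have oN: "opnorm N \<le> Lam / lam * \<mu>" using lam by (simp add: field_simps)
  have "M = \<mu> *\<^sub>R mat 1 + (-1) *\<^sub>R N" by (simp add: N_def)
  then have "opnorm M \<le> opnorm (\<mu> *\<^sub>R mat 1 :: 'n mat) + opnorm ((-1) *\<^sub>R N)"
    by (metis opnorm_triangle)
  also have "\<dots> = \<mu> + opnorm N"
  proof -
    have o2: "opnorm ((-1::real) *\<^sub>R N) = opnorm N" using opnorm_scaleR[of "-1" N] by simp
    show ?thesis by (simp only: oI o2)
  qed
  also have "\<dots> \<le> (1 + Lam / lam) * \<mu>" using oN by (simp add: algebra_simps)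
  finally show ?thesis .
qed

lemma quasiconcave_first_order:
  fixes F :: "('n::finite) mat \<Rightarrow> real"
  assumes qc: "quasiconcave F"
    and D: "\<forall>M\<in>Sym. (F has_derivative blinfun_apply (F' M)) (at M within Sym)"
    and X: "X \<in> Sym" and Y: "Y \<in> Sym" and le: "F X \<le> F Y"
  shows "0 \<le> blinfun_apply (F' X) (Y - X)"
proof (rule ccontr)
  assume "\<not> ?thesis"
  hence neg: "blinfun_apply (F' X) (Y - X) < 0" by simp
  have YX: "Y - X \<in> Sym" using Y X by (rule Sym_diff)
  have dg: "((\<lambda>t. F (X + t *\<^sub>R (Y - X))) has_real_derivative blinfun_apply (F' X) (Y - X)) (at 0)"
    using has_real_derivative_along_line[OF D X YX, of 0] by simp
  from DERIV_neg_dec_right[OF dg neg] obtain d where d: "d > 0"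
    and dd: "\<And>h. h > 0 \<Longrightarrow> h < d \<Longrightarrow> F (X + 0 *\<^sub>R (Y - X)) > F (X + (0 + h) *\<^sub>R (Y - X))" by blast
  define h where "h = min d 1 / 2"
  have h: "0 < h" "h < d" "h \<le> 1" using d by (auto simp: h_def)
  have "F (h *\<^sub>R Y + (1 - h) *\<^sub>R X) \<ge> min (F Y) (F X)"
    using qc Y X h unfolding quasiconcave_def by auto
  moreover have "h *\<^sub>R Y + (1 - h) *\<^sub>R X = X + h *\<^sub>R (Y - X)"
    by (simp add: algebra_simps)
  ultimately have "F (X + h *\<^sub>R (Y - X)) \<ge> F X" using le by simp
  moreover have "F X > F (X + h *\<^sub>R (Y - X))" using dd[of h] h by simp
  ultimately show False by simp
qed

lemma has_real_derivative_along_line_deriv: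
  fixes F' :: "('n::finite) mat \<Rightarrow> ('n mat \<Rightarrow>\<^sub>L real)"
  assumes D2: "\<forall>M\<in>Sym. (F' has_derivative blinfun_apply (F'' M)) (at M within Sym)"
    and M: "M \<in> Sym" and X: "X \<in> Sym"
  shows "((\<lambda>t. blinfun_apply (F' (M + t *\<^sub>R X)) X) has_real_derivative
           blinfun_apply (blinfun_apply (F'' M) X) X) (at 0)"
proof -
  have sub: "(\<lambda>t. M + t *\<^sub>R X) ` UNIV \<subseteq> Sym" using M X by (auto intro: Sym_add Sym_scaleR)
  have line: "((\<lambda>t. M + t *\<^sub>R X) has_derivative (\<lambda>s. s *\<^sub>R X)) (at 0 within UNIV)"
    by (auto intro!: derivative_eq_intros)
  have "((\<lambda>t. F' (M + t *\<^sub>R X)) has_derivative (\<lambda>s. blinfun_apply (F'' (M + 0 *\<^sub>R X)) (s *\<^sub>R X))) (at 0 within UNIV)"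
    by (rule has_derivative_in_compose2[OF _ sub _ line]) (use D2 in auto)
  then have "((\<lambda>t. blinfun_apply (F' (M + t *\<^sub>R X)) X) has_derivative
      (\<lambda>s. blinfun_apply (blinfun_apply (F'' (M + 0 *\<^sub>R X)) (s *\<^sub>R X)) X)) (at 0)"
    by (rule bounded_linear.has_derivative[OF blinfun.bounded_linear_left, simplified])
  moreover have "(\<lambda>s. blinfun_apply (blinfun_apply (F'' (M + 0 *\<^sub>R X)) (s *\<^sub>R X)) X) = (*) (blinfun_apply (blinfun_apply (F'' M) X) X)"
    by (rule ext) (simp add: blinfun.scaleR_right blinfun.scaleR_left)
  ultimately show ?thesis by (simp add: has_field_derivative_def)
qed

text \<open>If the second derivative were positive, F would have a strict minimum at M along the
  line M + t X, contradicting quasiconcavity at the midpoint of M - h X and M + h X.\<close>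
lemma quasiconcave_second_order:
  fixes F :: "('n::finite) mat \<Rightarrow> real"
  assumes qc: "quasiconcave F"
    and D: "\<forall>M\<in>Sym. (F has_derivative blinfun_apply (F' M)) (at M within Sym)"
    and D2: "\<forall>M\<in>Sym. (F' has_derivative blinfun_apply (F'' M)) (at M within Sym)"
    and M: "M \<in> Sym" and X: "X \<in> Sym" and crit: "blinfun_apply (F' M) X = 0"
  shows "blinfun_apply (blinfun_apply (F'' M) X) X \<le> 0"
proof (rule ccontr)
  assume "\<not> ?thesis"
  then have pos: "0 < blinfun_apply (blinfun_apply (F'' M) X) X" by simp
  obtain h where "h > 0" and right: "F (M + h *\<^sub>R X) > F (M + 0 *\<^sub>R X)"
    and left: "F (M + (-h) *\<^sub>R X) > F (M + 0 *\<^sub>R X)"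
    using DERIV_second_pos_imp_strict_local_min[where g="\<lambda>t. F (M + t *\<^sub>R X)",
        OF has_real_derivative_along_line[OF D M X] has_real_derivative_along_line_deriv[OF D2 M X] _ pos]
      crit by auto
  have "M + h *\<^sub>R X \<in> Sym" "M + (-h) *\<^sub>R X \<in> Sym" using M X by (auto intro!: Sym_add Sym_scaleR Sym_diff)
  then have "F ((1/2) *\<^sub>R (M + h *\<^sub>R X) + (1 - 1/2) *\<^sub>R (M + (-h) *\<^sub>R X)) \<ge> min (F (M + h *\<^sub>R X)) (F (M + (-h) *\<^sub>R X))"
    by (intro qc[unfolded quasiconcave_def, rule_format]) auto
  moreover have "(1/2) *\<^sub>R (M + h *\<^sub>R X) + (1 - 1/2) *\<^sub>R (M + (-h) *\<^sub>R X) = M"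
    by (simp add: algebra_simps scaleR_2[symmetric])
  ultimately show False using left right by simp
qed

section \<open>Functions with gradient and Hessian\<close>

definition has_grad_hess :: "(real^'n::finite \<Rightarrow> real) \<Rightarrow> (real^'n \<Rightarrow> real^'n) \<Rightarrow> (real^'n \<Rightarrow> real^'n^'n) \<Rightarrow> (real^'n) set \<Rightarrow> bool" where
  "has_grad_hess f g H S \<longleftrightarrow> (\<forall>x\<in>S. (f has_derivative (\<lambda>h. g x \<bullet> h)) (at x) \<and> (g has_derivative (\<lambda>h. H x *v h)) (at x))"

lemma has_grad_hess_const: "has_grad_hess (\<lambda>x. c) (\<lambda>x. 0) (\<lambda>x. 0) S"
  unfolding has_grad_hess_def by (auto intro!: derivative_eq_intros)

lemma has_grad_hess_add:
  assumes "has_grad_hess f1 g1 H1 S" "has_grad_hess f2 g2 H2 S"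
  shows "has_grad_hess (\<lambda>x. f1 x + f2 x) (\<lambda>x. g1 x + g2 x) (\<lambda>x. H1 x + H2 x) S"
  using assms unfolding has_grad_hess_def
  by (auto intro!: derivative_eq_intros simp: inner_add_left matrix_vector_mult_add_rdistrib)

lemma has_grad_hess_scale:
  assumes "has_grad_hess f g H S"
  shows "has_grad_hess (\<lambda>x. c * f x) (\<lambda>x. c *\<^sub>R g x) (\<lambda>x. c *\<^sub>R H x) S"
  using assms unfolding has_grad_hess_def
  by (auto intro!: derivative_eq_intros simp: scaleR_matrix_vector_assoc[symmetric])

lemma has_grad_hess_mult:
  assumes "has_grad_hess f1 g1 H1 S" "has_grad_hess f2 g2 H2 S"
  shows "has_grad_hess (\<lambda>x. f1 x * f2 x) (\<lambda>x. f1 x *\<^sub>R g2 x + f2 x *\<^sub>R g1 x)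
            (\<lambda>x. f1 x *\<^sub>R H2 x + f2 x *\<^sub>R H1 x + outer (g2 x) (g1 x) + outer (g1 x) (g2 x)) S"
  unfolding has_grad_hess_def
proof (intro ballI conjI)
  fix x assume x: "x \<in> S"
  have a1: "(f1 has_derivative (\<lambda>h. g1 x \<bullet> h)) (at x)" "(g1 has_derivative (\<lambda>h. H1 x *v h)) (at x)"
    and a2: "(f2 has_derivative (\<lambda>h. g2 x \<bullet> h)) (at x)" "(g2 has_derivative (\<lambda>h. H2 x *v h)) (at x)"
    using assms x unfolding has_grad_hess_def by auto
  have "((\<lambda>x. f1 x * f2 x) has_derivative (\<lambda>h. f1 x * (g2 x \<bullet> h) + (g1 x \<bullet> h) * f2 x)) (at x)"
    by (rule has_derivative_mult[OF a1(1) a2(1)])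
  moreover have "(\<lambda>h. f1 x * (g2 x \<bullet> h) + (g1 x \<bullet> h) * f2 x) = (\<lambda>h. (f1 x *\<^sub>R g2 x + f2 x *\<^sub>R g1 x) \<bullet> h)"
    by (rule ext) (simp add: inner_add_left algebra_simps)
  ultimately show "((\<lambda>x. f1 x * f2 x) has_derivative (\<lambda>h. (f1 x *\<^sub>R g2 x + f2 x *\<^sub>R g1 x) \<bullet> h)) (at x)"
    by simp
  have "((\<lambda>x. f1 x *\<^sub>R g2 x + f2 x *\<^sub>R g1 x) has_derivative
     (\<lambda>h. (f1 x *\<^sub>R (H2 x *v h) + (g1 x \<bullet> h) *\<^sub>R g2 x) + (f2 x *\<^sub>R (H1 x *v h) + (g2 x \<bullet> h) *\<^sub>R g1 x))) (at x)"
    by (rule has_derivative_add[OF has_derivative_scaleR[OF a1(1) a2(2)] has_derivative_scaleR[OF a2(1) a1(2)]])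
  moreover have "(\<lambda>h. (f1 x *\<^sub>R (H2 x *v h) + (g1 x \<bullet> h) *\<^sub>R g2 x) + (f2 x *\<^sub>R (H1 x *v h) + (g2 x \<bullet> h) *\<^sub>R g1 x))
     = (\<lambda>h. (f1 x *\<^sub>R H2 x + f2 x *\<^sub>R H1 x + outer (g2 x) (g1 x) + outer (g1 x) (g2 x)) *v h)"
    by (rule ext) (simp add: matrix_vector_mult_add_rdistrib scaleR_matrix_vector_assoc[symmetric] outer_mult_vec)
  ultimately show "((\<lambda>x. f1 x *\<^sub>R g2 x + f2 x *\<^sub>R g1 x) has_derivative
     (\<lambda>h. (f1 x *\<^sub>R H2 x + f2 x *\<^sub>R H1 x + outer (g2 x) (g1 x) + outer (g1 x) (g2 x)) *v h)) (at x)"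
    by simp
qed

lemma has_grad_hess_sum:
  assumes "finite I" "\<And>i. i \<in> I \<Longrightarrow> has_grad_hess (f i) (g i) (H i) S"
  shows "has_grad_hess (\<lambda>x. \<Sum>i\<in>I. f i x) (\<lambda>x. \<Sum>i\<in>I. g i x) (\<lambda>x. \<Sum>i\<in>I. H i x) S"
  using assms
proof (induction I rule: finite_induct)
  case empty
  then show ?case using has_grad_hess_const[of 0 S] by simp
next
  case (insert i I)
  have "has_grad_hess (\<lambda>x. f i x + (\<Sum>i\<in>I. f i x)) (\<lambda>x. g i x + (\<Sum>i\<in>I. g i x)) (\<lambda>x. H i x + (\<Sum>i\<in>I. H i x)) S"
    by (rule has_grad_hess_add) (use insert in auto)
  then show ?case using insert by simp
qed

lemma has_grad_hess_along_line:
  assumes "has_grad_hess f g H S" and "x0 + t *\<^sub>R \<xi> \<in> S"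
  shows "((\<lambda>t. f (x0 + t *\<^sub>R \<xi>)) has_real_derivative g (x0 + t *\<^sub>R \<xi>) \<bullet> \<xi>) (at t)"
proof -
  have line: "((\<lambda>t. x0 + t *\<^sub>R \<xi>) has_derivative (\<lambda>s. s *\<^sub>R \<xi>)) (at t)"
    by (auto intro!: derivative_eq_intros)
  have "((\<lambda>t. f (x0 + t *\<^sub>R \<xi>)) has_derivative (\<lambda>s. g (x0 + t *\<^sub>R \<xi>) \<bullet> (s *\<^sub>R \<xi>))) (at t)"
    by (rule has_derivative_compose[OF line]) (use assms in \<open>auto simp: has_grad_hess_def\<close>)
  moreover have "(\<lambda>s. g (x0 + t *\<^sub>R \<xi>) \<bullet> (s *\<^sub>R \<xi>)) = (*) (g (x0 + t *\<^sub>R \<xi>) \<bullet> \<xi>)"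
    by (rule ext) simp
  ultimately show ?thesis by (simp add: has_field_derivative_def)
qed

lemma has_grad_hess_along_line_deriv:
  assumes "has_grad_hess f g H S" and "x0 \<in> S"
  shows "((\<lambda>t. g (x0 + t *\<^sub>R \<xi>) \<bullet> \<xi>) has_real_derivative (H x0 *v \<xi>) \<bullet> \<xi>) (at 0)"
proof -
  have line: "((\<lambda>t. x0 + t *\<^sub>R \<xi>) has_derivative (\<lambda>s. s *\<^sub>R \<xi>)) (at 0)"
    by (auto intro!: derivative_eq_intros)
  have "((\<lambda>t. g (x0 + t *\<^sub>R \<xi>)) has_derivative (\<lambda>s. H x0 *v (s *\<^sub>R \<xi>))) (at 0)"
    by (rule has_derivative_compose[OF line]) (use assms in \<open>auto simp: has_grad_hess_def\<close>)
  then have "((\<lambda>t. g (x0 + t *\<^sub>R \<xi>) \<bullet> \<xi>) has_derivative (\<lambda>s. (H x0 *v (s *\<^sub>R \<xi>)) \<bullet> \<xi>)) (at 0)"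
    by (auto intro!: derivative_eq_intros)
  moreover have "(\<lambda>s. (H x0 *v (s *\<^sub>R \<xi>)) \<bullet> \<xi>) = (*) ((H x0 *v \<xi>) \<bullet> \<xi>)"
    by (rule ext) (simp add: matrix_vector_mult_scaleR)
  ultimately show ?thesis by (simp add: has_field_derivative_def)
qed

lemma has_grad_hess_local_max_quadratic_form:
  assumes C: "has_grad_hess f g H S" and S: "open S" and x0: "x0 \<in> S"
    and "0 < \<delta>" and max: "\<And>y. y \<in> ball x0 \<delta> \<Longrightarrow> f y \<le> f x0"
  shows "\<xi> \<bullet> (H x0 *v \<xi>) \<le> 0"
proof (cases "\<xi> = 0")
  case False
  then have nz: "norm \<xi> > 0" by simp
  obtain r where r: "r > 0" "ball x0 r \<subseteq> S" using S x0 open_contains_ball by blast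
  define \<delta>' where "\<delta>' = min \<delta> r / norm \<xi>"
  have "\<delta>' > 0" using \<open>0 < \<delta>\<close> r nz by (simp add: \<delta>'_def)
  have near: "x0 + t *\<^sub>R \<xi> \<in> ball x0 \<delta> \<inter> ball x0 r" if "\<bar>t\<bar> < \<delta>'" for t
  proof -
    have "\<bar>t\<bar> * norm \<xi> < min \<delta> r" using that nz by (simp add: \<delta>'_def pos_less_divide_eq)
    then show ?thesis by (simp add: dist_norm)
  qed
  have "(H x0 *v \<xi>) \<bullet> \<xi> \<le> 0"
  proof (rule DERIV_second_nonpos_at_local_max[OF \<open>\<delta>' > 0\<close> _ has_grad_hess_along_line_deriv[OF C x0]])
    show "((\<lambda>t. f (x0 + t *\<^sub>R \<xi>)) has_real_derivative g (x0 + t *\<^sub>R \<xi>) \<bullet> \<xi>) (at t)" if "\<bar>t\<bar> < \<delta>'" for t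
      by (rule has_grad_hess_along_line[OF C]) (use near[OF that] r in auto)
  qed (use near max in auto)
  then show ?thesis by (simp add: inner_commute)
qed simp

lemma has_grad_hess_local_max:
  assumes "has_grad_hess f g H S" "open S" "x0 \<in> S"
    and "0 < \<delta>" "\<And>y. y \<in> ball x0 \<delta> \<Longrightarrow> f y \<le> f x0"
    and ell: "elliptic_blinfun lam Lam L" and lam: "0 \<le> lam"
  shows "apply_sym L (H x0) \<le> 0"
  using apply_sym_nonpos[OF ell lam] has_grad_hess_local_max_quadratic_form[OF assms(1-5)] by blast

section \<open>Iterated partial derivatives\<close>

lemma dist_axis_steps_le:
  fixes x :: "real^'n::finite"
  assumes "0 \<le> s" "s \<le> t" "0 \<le> \<tau>" "\<tau> \<le> t"
  shows "dist (x + s *\<^sub>R axis i 1 + \<tau> *\<^sub>R axis j 1) x \<le> 2 * t"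
proof -
  have "norm (s *\<^sub>R axis i (1::real) + \<tau> *\<^sub>R axis j 1) \<le> norm (s *\<^sub>R axis i (1::real)) + norm (\<tau> *\<^sub>R axis j (1::real))"
    by (rule norm_triangle_ineq)
  also have "\<dots> \<le> 2 * t" using assms by simp
  finally show ?thesis by (simp add: dist_norm add.assoc)
qed

lemma second_difference_mean_value:
  fixes f :: "real^'n::finite \<Rightarrow> real"
  assumes df: "\<And>x. x\<in>S \<Longrightarrow> (f has_derivative (\<lambda>h. \<Sum>i\<in>UNIV. h$i * g i x)) (at x)"
    and dg: "\<And>i x. x\<in>S \<Longrightarrow> (g i has_derivative (\<lambda>h. \<Sum>j\<in>UNIV. h$j * G j i x)) (at x)"
    and r: "ball x r \<subseteq> S" and t: "0 < t" "2 * t < r"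
  shows "\<exists>p. dist p x \<le> 2 * t \<and>
     f (x + t *\<^sub>R axis i 1 + t *\<^sub>R axis j 1) - f (x + t *\<^sub>R axis i 1) - f (x + t *\<^sub>R axis j 1) + f x
       = t * t * G j i p"
proof -
  let ?a = "axis i (1::real)" and ?b = "axis j (1::real)"
  have inS: "x + s *\<^sub>R ?a + \<tau> *\<^sub>R ?b \<in> S" if "0 \<le> s" "s \<le> t" "0 \<le> \<tau>" "\<tau> \<le> t" for s \<tau>
    using dist_axis_steps_le[OF that, of x i j] t r by (auto simp: dist_commute)
  have "\<exists>\<sigma>. 0 < \<sigma> \<and> \<sigma> < t \<and> (f (x + t *\<^sub>R ?a + t *\<^sub>R ?b) - f (x + t *\<^sub>R ?a)) - (f (x + t *\<^sub>R ?b) - f x)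
      = t * (\<Sum>k\<in>UNIV. ?a$k * (g k (x + \<sigma> *\<^sub>R ?a + t *\<^sub>R ?b) - g k (x + \<sigma> *\<^sub>R ?a)))"
  proof (rule mean_value_along_line[where f="\<lambda>y. f (y + t *\<^sub>R ?b) - f y", OF _ t(1)])
    fix s assume "0 \<le> s" "s \<le> t"
    then have in1: "x + s *\<^sub>R ?a + t *\<^sub>R ?b \<in> S" and in0: "x + s *\<^sub>R ?a \<in> S"
      using inS[of s t] inS[of s 0] t by auto
    have shift: "((\<lambda>y. y + t *\<^sub>R ?b) has_derivative (\<lambda>h. h)) (at (x + s *\<^sub>R ?a))"
      by (auto intro!: derivative_eq_intros)
    have "((\<lambda>y. f (y + t *\<^sub>R ?b) - f y) has_derivative
        (\<lambda>h. (\<Sum>k\<in>UNIV. h$k * g k (x + s *\<^sub>R ?a + t *\<^sub>R ?b)) - (\<Sum>k\<in>UNIV. h$k * g k (x + s *\<^sub>R ?a)))) (at (x + s *\<^sub>R ?a))"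
      by (rule has_derivative_diff[OF has_derivative_compose[OF shift df[OF in1]] df[OF in0]])
    then show "((\<lambda>y. f (y + t *\<^sub>R ?b) - f y) has_derivative
        (\<lambda>h. \<Sum>k\<in>UNIV. h$k * (g k (x + s *\<^sub>R ?a + t *\<^sub>R ?b) - g k (x + s *\<^sub>R ?a)))) (at (x + s *\<^sub>R ?a))"
      by (simp add: right_diff_distrib sum_subtractf)
  qed
  then obtain \<sigma> where \<sigma>: "0 < \<sigma>" "\<sigma> < t" and diff_a:
    "(f (x + t *\<^sub>R ?a + t *\<^sub>R ?b) - f (x + t *\<^sub>R ?a)) - (f (x + t *\<^sub>R ?b) - f x)
      = t * (g i (x + \<sigma> *\<^sub>R ?a + t *\<^sub>R ?b) - g i (x + \<sigma> *\<^sub>R ?a))"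
    by (auto simp: sum_axis_mult)
  have "\<exists>\<tau>. 0 < \<tau> \<and> \<tau> < t \<and> g i (x + \<sigma> *\<^sub>R ?a + t *\<^sub>R ?b) - g i (x + \<sigma> *\<^sub>R ?a)
      = t * (\<Sum>k\<in>UNIV. ?b$k * G k i (x + \<sigma> *\<^sub>R ?a + \<tau> *\<^sub>R ?b))"
    by (rule mean_value_along_line[OF dg t(1)]) (use inS \<sigma> in auto)
  then obtain \<tau> where \<tau>: "0 < \<tau>" "\<tau> < t" and diff_b:
    "g i (x + \<sigma> *\<^sub>R ?a + t *\<^sub>R ?b) - g i (x + \<sigma> *\<^sub>R ?a) = t * G j i (x + \<sigma> *\<^sub>R ?a + \<tau> *\<^sub>R ?b)"
    by (auto simp: sum_axis_mult)
  have "dist (x + \<sigma> *\<^sub>R ?a + \<tau> *\<^sub>R ?b) x \<le> 2 * t"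
    using dist_axis_steps_le[of \<sigma> t \<tau>] \<sigma> \<tau> by simp
  moreover have "f (x + t *\<^sub>R ?a + t *\<^sub>R ?b) - f (x + t *\<^sub>R ?a) - f (x + t *\<^sub>R ?b) + f x
      = t * t * G j i (x + \<sigma> *\<^sub>R ?a + \<tau> *\<^sub>R ?b)"
    using diff_a diff_b by (simp add: algebra_simps)
  ultimately show ?thesis by blast
qed

lemma symmetric_second_partials:
  fixes f :: "real^'n::finite \<Rightarrow> real"
  assumes S: "open S"
    and df: "\<And>x. x\<in>S \<Longrightarrow> (f has_derivative (\<lambda>h. \<Sum>i\<in>UNIV. h$i * g i x)) (at x)"
    and dg: "\<And>i x. x\<in>S \<Longrightarrow> (g i has_derivative (\<lambda>h. \<Sum>j\<in>UNIV. h$j * G j i x)) (at x)"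
    and cG: "\<And>i j. continuous_on S (G j i)"
    and x: "x \<in> S"
  shows "G j i x = G i j x"
proof (rule ccontr)
  assume ne: "G j i x \<noteq> G i j x"
  define e where "e = \<bar>G j i x - G i j x\<bar> / 2"
  have e: "e > 0" using ne by (simp add: e_def)
  have c1: "isCont (G j i) x" and c2: "isCont (G i j) x"
    using cG S x by (auto simp: continuous_on_eq_continuous_at)
  obtain d1 where d1: "d1 > 0" "\<And>y. dist y x < d1 \<Longrightarrow> dist (G j i y) (G j i x) < e"
    using c1 e unfolding continuous_at_eps_delta by blast
  obtain d2 where d2: "d2 > 0" "\<And>y. dist y x < d2 \<Longrightarrow> dist (G i j y) (G i j x) < e"
    using c2 e unfolding continuous_at_eps_delta by blast
  obtain r where r: "r > 0" "ball x r \<subseteq> S" using S x open_contains_ball by blast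
  define t where "t = min (min d1 d2) r / 4"
  have t: "0 < t" "2 * t < r" "2 * t < d1" "2 * t < d2" using d1 d2 r by (auto simp: t_def)
  obtain p where p: "dist p x \<le> 2 * t"
    "f (x + t *\<^sub>R axis i 1 + t *\<^sub>R axis j 1) - f (x + t *\<^sub>R axis i 1) - f (x + t *\<^sub>R axis j 1) + f x = t * t * G j i p"
    using second_difference_mean_value[OF df dg r(2) t(1,2), of i j] by blast
  obtain q where q: "dist q x \<le> 2 * t"
    "f (x + t *\<^sub>R axis j 1 + t *\<^sub>R axis i 1) - f (x + t *\<^sub>R axis j 1) - f (x + t *\<^sub>R axis i 1) + f x = t * t * G i j q"
    using second_difference_mean_value[OF df dg r(2) t(1,2), of j i] by blast
  have "t * t * G j i p = t * t * G i j q" using p(2) q(2) by (simp add: algebra_simps)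
  hence pq: "G j i p = G i j q" using t by simp
  have "dist (G j i p) (G j i x) < e" using d1 p t by simp
  moreover have "dist (G i j q) (G i j x) < e" using d2 q t by simp
  ultimately have "\<bar>G j i x - G i j x\<bar> < 2 * e" using pq by (simp add: dist_real_def)
  then show False by (simp add: e_def)
qed

text \<open>D (i # is) is the partial derivative in direction i of D is, so with D [] = u the
  entry D [i, j] is the second derivative in directions i and j, applied in the order j, i.\<close>

definition deriv_family :: "nat \<Rightarrow> (('n::finite) list \<Rightarrow> real^'n \<Rightarrow> real) \<Rightarrow> bool" where
  "deriv_family k D \<longleftrightarrow> (\<forall>is. length is < k \<longrightarrow> (\<forall>x\<in>ball 0 1. (D is has_derivative (\<lambda>h. \<Sum>i\<in>UNIV. h$i * D (i#is) x)) (at x)))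
     \<and> (\<forall>is. length is \<le> k \<longrightarrow> continuous_on (cball 0 1) (D is))"

lemma Ck_on_deriv_family:
  fixes u :: "real^'n::finite \<Rightarrow> real"
  assumes "Ck_on k (cball 0 1) u"
  shows "\<exists>D. deriv_family k D \<and> (\<forall>x\<in>cball 0 1. D [] x = u x)"
proof -
  obtain D :: "'n list \<Rightarrow> real^'n \<Rightarrow> real" where D0: "\<forall>x\<in>cball 0 1. D [] x = u x"
    and Dd: "\<forall>is. length is < k \<longrightarrow> (\<forall>x\<in>cball 0 1.
          (D is has_derivative (\<lambda>h. \<Sum>i\<in>UNIV. h $ i * D (i # is) x)) (at x within cball 0 1))"
    and Dc: "\<forall>is. length is \<le> k \<longrightarrow> continuous_on (cball 0 1) (D is)"
    using assms unfolding Ck_on_def by blast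
  have "deriv_family k D"
    unfolding deriv_family_def
  proof (intro conjI allI impI ballI)
    fix "is" :: "'n list" and x assume l: "length is < k" and x: "(x::real^'n) \<in> ball 0 1"
    have "x \<in> interior (cball 0 1)" using x by simp
    then have eq: "at x within cball 0 1 = at x" by (rule at_within_interior)
    have "x \<in> cball 0 1" using x by auto
    then have "(D is has_derivative (\<lambda>h. \<Sum>i\<in>UNIV. h $ i * D (i # is) x)) (at x within cball 0 1)"
      using Dd l by blast
    then show "(D is has_derivative (\<lambda>h. \<Sum>i\<in>UNIV. h $ i * D (i # is) x)) (at x)"
      unfolding eq .
  qed (use Dc in auto)
  then show ?thesis using D0 by blast
qed

lemma deriv_family_has_derivative:
  "deriv_family k D \<Longrightarrow> length is < k \<Longrightarrow> x \<in> ball 0 1 \<Longrightarrow> (D is has_derivative (\<lambda>h. \<Sum>i\<in>UNIV. h$i * D (i#is) x)) (at x)"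
  unfolding deriv_family_def by blast

lemma deriv_family_continuous:
  "deriv_family k D \<Longrightarrow> length is \<le> k \<Longrightarrow> continuous_on (cball 0 1) (D is)"
  unfolding deriv_family_def by blast

lemma deriv_family_swap_head:
  assumes D: "deriv_family k D" and l: "length t + 2 \<le> k" and x: "x \<in> ball 0 1"
  shows "D (a#b#t) x = D (b#a#t) x"
proof -
  have "D (a#b#t) x = D (b#a#t) x"
  proof (rule symmetric_second_partials[where S="ball 0 1" and f="D t" and g="\<lambda>i. D (i#t)" and G="\<lambda>j i. D (j#i#t)"])
    show "\<And>x. x \<in> ball 0 1 \<Longrightarrow> (D t has_derivative (\<lambda>h. \<Sum>i\<in>UNIV. h $ i * D (i # t) x)) (at x)"
      using deriv_family_has_derivative[OF D] l by simp
    show "\<And>i x. x \<in> ball 0 1 \<Longrightarrow> (D (i # t) has_derivative (\<lambda>h. \<Sum>j\<in>UNIV. h $ j * D (j # i # t) x)) (at x)"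
      using deriv_family_has_derivative[OF D] l by simp
    fix i j
    have "continuous_on (cball 0 1) (D (j#i#t))" using deriv_family_continuous[OF D] l by simp
    then show "continuous_on (ball 0 1) (D (j # i # t))"
      by (rule continuous_on_subset) (rule ball_subset_cball)
  qed (use x in auto)
  then show ?thesis .
qed

lemma deriv_family_cong_tail:
  assumes D: "deriv_family k D" and l: "length t < k" "length t' < k"
    and eq: "\<And>y. y \<in> ball 0 1 \<Longrightarrow> D t y = D t' y" and x: "x \<in> ball 0 1"
  shows "D (a#t) x = D (a#t') x"
proof -
  have d1: "(D t has_derivative (\<lambda>h. \<Sum>i\<in>UNIV. h$i * D (i#t) x)) (at x)"
    using deriv_family_has_derivative[OF D l(1) x] .
  have "(D t' has_derivative (\<lambda>h. \<Sum>i\<in>UNIV. h$i * D (i#t') x)) (at x)"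
    using deriv_family_has_derivative[OF D l(2) x] .
  then have d2: "(D t has_derivative (\<lambda>h. \<Sum>i\<in>UNIV. h$i * D (i#t') x)) (at x)"
    by (rule has_derivative_transform_within_open[OF _ open_ball x]) (use eq in auto)
  have "(\<lambda>h. \<Sum>i\<in>UNIV. h$i * D (i#t) x) = (\<lambda>h. \<Sum>i\<in>UNIV. h$i * D (i#t') x)"
    by (rule has_derivative_unique[OF d1 d2])
  then have "(\<Sum>i\<in>UNIV. axis a 1 $i * D (i#t) x) = (\<Sum>i\<in>UNIV. axis a 1 $i * D (i#t') x)"
    by metis
  then show ?thesis by (simp add: sum_axis_mult)
qed

lemma deriv_family_swap:
  assumes D: "deriv_family k D"
  shows "length (l1 @ a # b # l2) \<le> k \<Longrightarrow> x \<in> ball 0 1 \<Longrightarrow> D (l1 @ a # b # l2) x = D (l1 @ b # a # l2) x"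
proof (induction l1 arbitrary: x)
  case Nil
  then show ?case using deriv_family_swap_head[OF D, of l2 x a b] by simp
next
  case (Cons c l1)
  have "D (c # (l1 @ a # b # l2)) x = D (c # (l1 @ b # a # l2)) x"
    by (rule deriv_family_cong_tail[OF D]) (use Cons in auto)
  then show ?case by simp
qed

lemma deriv_family_swap_2_01: "deriv_family k D \<Longrightarrow> 2 \<le> k \<Longrightarrow> x \<in> ball 0 1 \<Longrightarrow> D [a,b] x = D [b,a] x"
  using deriv_family_swap[of k D "[]" a b "[]" x] by simp

lemma deriv_family_swap_3_01: "deriv_family k D \<Longrightarrow> 3 \<le> k \<Longrightarrow> x \<in> ball 0 1 \<Longrightarrow> D [a,b,c] x = D [b,a,c] x"
  using deriv_family_swap[of k D "[]" a b "[c]" x] by simp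

lemma deriv_family_swap_3_12: "deriv_family k D \<Longrightarrow> 3 \<le> k \<Longrightarrow> x \<in> ball 0 1 \<Longrightarrow> D [c,a,b] x = D [c,b,a] x"
  using deriv_family_swap[of k D "[c]" a b "[]" x] by simp

lemma deriv_family_swap_4_01: "deriv_family k D \<Longrightarrow> 4 \<le> k \<Longrightarrow> x \<in> ball 0 1 \<Longrightarrow> D [a,b,c,d] x = D [b,a,c,d] x"
  using deriv_family_swap[of k D "[]" a b "[c,d]" x] by simp

lemma deriv_family_swap_4_12: "deriv_family k D \<Longrightarrow> 4 \<le> k \<Longrightarrow> x \<in> ball 0 1 \<Longrightarrow> D [c,a,b,d] x = D [c,b,a,d] x"
  using deriv_family_swap[of k D "[c]" a b "[d]" x] by simp

lemma deriv_family_swap_4_23: "deriv_family k D \<Longrightarrow> 4 \<le> k \<Longrightarrow> x \<in> ball 0 1 \<Longrightarrow> D [c,d,a,b] x = D [c,d,b,a] x"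
  using deriv_family_swap[of k D "[c,d]" a b "[]" x] by simp

lemma deriv_family_rev3: "deriv_family k D \<Longrightarrow> 3 \<le> k \<Longrightarrow> x \<in> ball 0 1 \<Longrightarrow> D [a,b,c] x = D [c,b,a] x"
proof -
  assume D: "deriv_family k D" and k: "3 \<le> k" and x: "x \<in> ball 0 1"
  have "D [a,b,c] x = D [b,a,c] x" by (rule deriv_family_swap_3_01[OF D k x])
  also have "\<dots> = D [b,c,a] x" by (rule deriv_family_swap_3_12[OF D k x])
  also have "\<dots> = D [c,b,a] x" by (rule deriv_family_swap_3_01[OF D k x])
  finally show ?thesis .
qed

lemma deriv_family_rev4: "deriv_family k D \<Longrightarrow> 4 \<le> k \<Longrightarrow> x \<in> ball 0 1 \<Longrightarrow> D [a,b,c,d] x = D [d,c,b,a] x"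
proof -
  assume D: "deriv_family k D" and k: "4 \<le> k" and x: "x \<in> ball 0 1"
  note s01 = deriv_family_swap_4_01[OF D k x] and s12 = deriv_family_swap_4_12[OF D k x] and s23 = deriv_family_swap_4_23[OF D k x]
  have "D [a,b,c,d] x = D [b,a,c,d] x" by (rule s01)
  also have "\<dots> = D [b,c,a,d] x" by (rule s12)
  also have "\<dots> = D [b,c,d,a] x" by (rule s23)
  also have "\<dots> = D [c,b,d,a] x" by (rule s01)
  also have "\<dots> = D [c,d,b,a] x" by (rule s12)
  also have "\<dots> = D [d,c,b,a] x" by (rule s01)
  finally show ?thesis .
qed

definition hess_mat :: "(('n::finite) list \<Rightarrow> real^'n \<Rightarrow> real) \<Rightarrow> real^'n \<Rightarrow> 'n mat" where
  "hess_mat D x = (\<chi> i j. D [i,j] x)"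
definition hess_mat_dir :: "(('n::finite) list \<Rightarrow> real^'n \<Rightarrow> real) \<Rightarrow> real^'n \<Rightarrow> real^'n \<Rightarrow> 'n mat" where
  "hess_mat_dir D h x = (\<chi> i j. \<Sum>k\<in>UNIV. h$k * D [k,i,j] x)"
definition hess_mat_dir2 :: "(('n::finite) list \<Rightarrow> real^'n \<Rightarrow> real) \<Rightarrow> real^'n \<Rightarrow> real^'n \<Rightarrow> real^'n \<Rightarrow> 'n mat" where
  "hess_mat_dir2 D e h x = (\<chi> i j. \<Sum>k\<in>UNIV. e$k * (\<Sum>m\<in>UNIV. h$m * D [m,k,i,j] x))"

lemma hess_mat_Sym: assumes D: "deriv_family k D" and k: "2 \<le> k" and x: "x \<in> ball 0 1" shows "hess_mat D x \<in> Sym"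
  unfolding Sym_iff_components hess_mat_def using deriv_family_swap_2_01[OF D k x] by simp

lemma hess_mat_dir_Sym: assumes D: "deriv_family k D" and k: "3 \<le> k" and x: "x \<in> ball 0 1" shows "hess_mat_dir D h x \<in> Sym"
  unfolding Sym_iff_components hess_mat_dir_def using deriv_family_swap_3_12[OF D k x] by simp

lemma hess_mat_has_derivative:
  assumes D: "deriv_family k D" and k: "3 \<le> k" and x: "x \<in> ball 0 1"
  shows "(hess_mat D has_derivative (\<lambda>h. hess_mat_dir D h x)) (at x)"
proof -
  have "((\<lambda>x. \<chi> i. \<chi> j. D [i,j] x) has_derivative (\<lambda>h. \<chi> i. \<chi> j. \<Sum>k\<in>UNIV. h$k * D [k,i,j] x)) (at x)"
  proof (rule has_derivative_vec_lambda)
    fix i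
    show "((\<lambda>x. \<chi> j. D [i,j] x) has_derivative (\<lambda>h. \<chi> j. \<Sum>k\<in>UNIV. h$k * D [k,i,j] x)) (at x)"
      by (rule has_derivative_vec_lambda) (use deriv_family_has_derivative[OF D _ x] k in auto)
  qed
  then show ?thesis unfolding hess_mat_def hess_mat_dir_def by simp
qed

lemma hess_mat_dir_has_derivative:
  assumes D: "deriv_family k D" and k: "4 \<le> k" and x: "x \<in> ball 0 1"
  shows "(hess_mat_dir D e has_derivative (\<lambda>h. hess_mat_dir2 D e h x)) (at x)"
proof -
  have "((\<lambda>x. \<chi> i. \<chi> j. \<Sum>k\<in>UNIV. e$k * D [k,i,j] x) has_derivative (\<lambda>h. \<chi> i. \<chi> j. \<Sum>k\<in>UNIV. e$k * (\<Sum>m\<in>UNIV. h$m * D [m,k,i,j] x))) (at x)"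
  proof (rule has_derivative_vec_lambda)
    fix i
    show "((\<lambda>x. \<chi> j. \<Sum>k\<in>UNIV. e$k * D [k,i,j] x) has_derivative (\<lambda>h. \<chi> j. \<Sum>k\<in>UNIV. e$k * (\<Sum>m\<in>UNIV. h$m * D [m,k,i,j] x))) (at x)"
    proof (rule has_derivative_vec_lambda)
      fix j
      show "((\<lambda>x. \<Sum>k\<in>UNIV. e$k * D [k,i,j] x) has_derivative (\<lambda>h. \<Sum>k\<in>UNIV. e$k * (\<Sum>m\<in>UNIV. h$m * D [m,k,i,j] x))) (at x)"
        by (rule has_derivative_sum, rule has_derivative_mult_right) (use deriv_family_has_derivative[OF D _ x] k in auto)
    qed
  qed
  then show ?thesis unfolding hess_mat_dir_def hess_mat_dir2_def by simp
qed

lemma pdiff_eqI: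
  fixes f f0 :: "real^'n::finite \<Rightarrow> real"
  assumes U: "open U" and x: "x \<in> U" and eq: "\<And>y. y \<in> U \<Longrightarrow> f y = f0 y"
    and d: "(f0 has_derivative (\<lambda>h. \<Sum>k\<in>UNIV. h$k * g k)) (at x)"
  shows "pdiff i f x = g i"
proof -
  obtain r where r: "r > 0" "ball x r \<subseteq> U" using U x open_contains_ball by blast
  have "((\<lambda>t. f0 (x + t *\<^sub>R axis i 1)) has_real_derivative (\<Sum>k\<in>UNIV. axis i 1 $ k * g k)) (at 0)"
    by (rule has_real_derivative_line_comp) (use d in simp)
  then have d1: "((\<lambda>t. f0 (x + t *\<^sub>R axis i 1)) has_derivative (*) (g i)) (at 0)"
    by (simp add: sum_axis_mult has_field_derivative_def)
  have "((\<lambda>t. f (x + t *\<^sub>R axis i 1)) has_derivative (*) (g i)) (at 0)"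
  proof (rule has_derivative_transform_within_open[OF d1 open_ball[of 0 r]])
    show "0 \<in> ball (0::real) r" using r by simp
    fix t :: real assume "t \<in> ball 0 r"
    then have "x + t *\<^sub>R axis i 1 \<in> ball x r" by (simp add: dist_norm)
    then show "f0 (x + t *\<^sub>R axis i 1) = f (x + t *\<^sub>R axis i 1)" using eq r by auto
  qed
  then have "((\<lambda>t. f (x + t *\<^sub>R axis i 1)) has_real_derivative g i) (at 0)"
    by (simp add: has_field_derivative_def)
  then show ?thesis unfolding pdiff_def by (rule DERIV_imp_deriv)
qed

lemma pdiff_deriv_family:
  assumes D: "deriv_family k D" and k: "length t < k" and x: "x \<in> ball 0 1"
    and eq: "\<And>y. y \<in> ball 0 1 \<Longrightarrow> f y = D t y"
  shows "pdiff i f x = D (i#t) x"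
  by (rule pdiff_eqI[OF open_ball x eq deriv_family_has_derivative[OF D k x]])

lemma grad_deriv_family:
  assumes D: "deriv_family k D" and k: "1 \<le> k" and u: "\<forall>y\<in>cball 0 1. D [] y = u y" and x: "x \<in> ball 0 1"
  shows "grad u x = (\<chi> i. D [i] x)"
  unfolding grad_def using pdiff_deriv_family[OF D _ x, of "[]" u] k u by auto

lemma hess_deriv_family:
  assumes D: "deriv_family k D" and k: "2 \<le> k" and u: "\<forall>y\<in>cball 0 1. D [] y = u y" and x: "x \<in> ball 0 1"
  shows "hess u x = hess_mat D x"
proof -
  have p1: "pdiff j u y = D [j] y" if "y \<in> ball 0 1" for j y
    using pdiff_deriv_family[OF D _ that, of "[]" u] k u by auto
  have "pdiff i (pdiff j u) x = D [i,j] x" for i j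
    using pdiff_deriv_family[OF D _ x, of "[j]" "pdiff j u" i] k p1 by auto
  then show ?thesis unfolding hess_def hess_mat_def by simp
qed

lemma differentiated_equation_eq_0:
  fixes F :: "('n::finite) mat \<Rightarrow> real"
  assumes D: "deriv_family k D" and k: "3 \<le> k" and u: "\<forall>y\<in>cball 0 1. D [] y = u y"
    and eq: "\<forall>y\<in>ball 0 1. F (hess u y) = 0"
    and DF: "\<forall>M\<in>Sym. (F has_derivative blinfun_apply (F' M)) (at M within Sym)"
    and x: "x \<in> ball 0 1"
  shows "blinfun_apply (F' (hess_mat D x)) (hess_mat_dir D h x) = 0"
proof -
  have sub: "hess_mat D ` ball 0 1 \<subseteq> Sym" using hess_mat_Sym[OF D] k by auto
  have "((\<lambda>y. F (hess_mat D y)) has_derivative (\<lambda>h. blinfun_apply (F' (hess_mat D x)) (hess_mat_dir D h x))) (at x within ball 0 1)"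
    by (rule has_derivative_in_compose2[OF _ sub x has_derivative_at_withinI[OF hess_mat_has_derivative[OF D k x]]])
       (use DF in auto)
  then have d1: "((\<lambda>y. F (hess_mat D y)) has_derivative (\<lambda>h. blinfun_apply (F' (hess_mat D x)) (hess_mat_dir D h x))) (at x)"
    using at_within_open[OF x open_ball] by simp
  have "((\<lambda>y. 0::real) has_derivative (\<lambda>h. 0)) (at x)" by simp
  then have d2: "((\<lambda>y. F (hess_mat D y)) has_derivative (\<lambda>h. 0)) (at x)"
  proof (rule has_derivative_transform_within_open[OF _ open_ball x])
    fix y assume "y \<in> ball (0::real^'n) 1"
    then show "0 = F (hess_mat D y)" using eq hess_deriv_family[OF D _ u] k by auto
  qed
  have "(\<lambda>h. blinfun_apply (F' (hess_mat D x)) (hess_mat_dir D h x)) = (\<lambda>h. 0)"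
    by (rule has_derivative_unique[OF d1 d2])
  then show ?thesis by metis
qed

lemma twice_differentiated_equation_nonneg:
  fixes F :: "('n::finite) mat \<Rightarrow> real"
  assumes D: "deriv_family k D" and k: "4 \<le> k" and u: "\<forall>y\<in>cball 0 1. D [] y = u y"
    and eq: "\<forall>y\<in>ball 0 1. F (hess u y) = 0"
    and qc: "quasiconcave F"
    and DF: "\<forall>M\<in>Sym. (F has_derivative blinfun_apply (F' M)) (at M within Sym)"
    and DF2: "\<forall>M\<in>Sym. (F' has_derivative blinfun_apply (F'' M)) (at M within Sym)"
    and x: "x \<in> ball 0 1"
  shows "0 \<le> blinfun_apply (F' (hess_mat D x)) (hess_mat_dir2 D e e x)"
proof -
  have k3: "3 \<le> k" using k by simp
  have sub: "hess_mat D ` ball 0 1 \<subseteq> Sym" using hess_mat_Sym[OF D] k by auto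
  have "((\<lambda>y. F' (hess_mat D y)) has_derivative (\<lambda>h. blinfun_apply (F'' (hess_mat D x)) (hess_mat_dir D h x))) (at x within ball 0 1)"
    by (rule has_derivative_in_compose2[OF _ sub x has_derivative_at_withinI[OF hess_mat_has_derivative[OF D k3 x]]])
       (use DF2 in auto)
  then have dA: "((\<lambda>y. F' (hess_mat D y)) has_derivative (\<lambda>h. blinfun_apply (F'' (hess_mat D x)) (hess_mat_dir D h x))) (at x)"
    using at_within_open[OF x open_ball] by simp
  have d1: "((\<lambda>y. blinfun_apply (F' (hess_mat D y)) (hess_mat_dir D e y)) has_derivative
      (\<lambda>h. blinfun_apply (F' (hess_mat D x)) (hess_mat_dir2 D e h x) + blinfun_apply (blinfun_apply (F'' (hess_mat D x)) (hess_mat_dir D h x)) (hess_mat_dir D e x))) (at x)"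
    by (rule blinfun.FDERIV[OF dA hess_mat_dir_has_derivative[OF D k x]])
  have "((\<lambda>y. 0::real) has_derivative (\<lambda>h. 0)) (at x)" by simp
  then have d2: "((\<lambda>y. blinfun_apply (F' (hess_mat D y)) (hess_mat_dir D e y)) has_derivative (\<lambda>h. 0)) (at x)"
  proof (rule has_derivative_transform_within_open[OF _ open_ball x])
    fix y assume "y \<in> ball (0::real^'n) 1"
    then show "0 = blinfun_apply (F' (hess_mat D y)) (hess_mat_dir D e y)"
      using differentiated_equation_eq_0[OF D k3 u eq DF] by simp
  qed
  have "(\<lambda>h. blinfun_apply (F' (hess_mat D x)) (hess_mat_dir2 D e h x) + blinfun_apply (blinfun_apply (F'' (hess_mat D x)) (hess_mat_dir D h x)) (hess_mat_dir D e x)) = (\<lambda>h. 0)"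
    by (rule has_derivative_unique[OF d1 d2])
  then have s: "blinfun_apply (F' (hess_mat D x)) (hess_mat_dir2 D e e x) + blinfun_apply (blinfun_apply (F'' (hess_mat D x)) (hess_mat_dir D e x)) (hess_mat_dir D e x) = 0"
    by metis
  have "blinfun_apply (blinfun_apply (F'' (hess_mat D x)) (hess_mat_dir D e x)) (hess_mat_dir D e x) \<le> 0"
    by (rule quasiconcave_second_order[OF qc DF DF2 hess_mat_Sym[OF D _ x] hess_mat_dir_Sym[OF D k3 x]])
       (use k differentiated_equation_eq_0[OF D k3 u eq DF x] in auto)
  then show ?thesis using s by linarith
qed

section \<open>The Bernstein function for the gradient\<close>

definition eta :: "real^'n::finite \<Rightarrow> real" where "eta x = 1 - x \<bullet> x"
definition grad_eta :: "real^'n::finite \<Rightarrow> real^'n" where "grad_eta x = (-2) *\<^sub>R x"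
definition hess_eta :: "real^'n::finite \<Rightarrow> real^'n^'n" where "hess_eta x = (-2) *\<^sub>R mat 1"

lemma eta_bounds: "x \<in> cball (0::real^'n::finite) 1 \<Longrightarrow> 0 \<le> eta x \<and> eta x \<le> 1"
proof -
  assume "x \<in> cball 0 1"
  then have "norm x \<le> 1" by simp
  then have "(norm x)^2 \<le> 1" by (simp add: power_le_one)
  then show ?thesis by (simp add: eta_def power2_norm_eq_inner[symmetric])
qed

lemma eta_pos: "x \<in> ball (0::real^'n::finite) 1 \<Longrightarrow> 0 < eta x"
proof -
  assume "x \<in> ball 0 1"
  then have "norm x < 1" by simp
  then have "(norm x)^2 < 1" by (simp add: power_less_one_iff abs_less_iff)
  then show ?thesis by (simp add: eta_def power2_norm_eq_inner[symmetric])
qed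

lemma eta_eq_0_sphere: "x \<in> cball (0::real^'n::finite) 1 \<Longrightarrow> x \<notin> ball 0 1 \<Longrightarrow> eta x = 0"
proof -
  assume "x \<in> cball 0 1" "x \<notin> ball 0 1"
  then have "norm x = 1" by simp
  then have "x \<bullet> x = 1" by (metis norm_eq_1)
  then show ?thesis by (simp add: eta_def)
qed

lemma eta_half: "y \<in> ball (0::real^'n::finite) (1/2) \<Longrightarrow> 3/4 \<le> eta y"
proof -
  assume "y \<in> ball 0 (1/2)"
  then have n: "norm y < 1/2" by simp
  have "y \<bullet> y = (norm y)^2" by (simp add: power2_norm_eq_inner)
  also have "\<dots> \<le> (1/2)^2" using n by (intro power_mono) auto
  finally have "y \<bullet> y \<le> 1/4" by (simp add: power2_eq_square)
  then show ?thesis by (simp add: eta_def)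
qed

lemma continuous_on_eta: "continuous_on S eta"
  unfolding eta_def[abs_def] by (intro continuous_intros)

definition gradD :: "(('n::finite) list \<Rightarrow> real^'n \<Rightarrow> real) \<Rightarrow> 'n list \<Rightarrow> real^'n \<Rightarrow> real^'n" where
  "gradD D t x = (\<chi> i. D (i#t) x)"
definition hessD :: "(('n::finite) list \<Rightarrow> real^'n \<Rightarrow> real) \<Rightarrow> 'n list \<Rightarrow> real^'n \<Rightarrow> real^'n^'n" where
  "hessD D t x = (\<chi> i j. D (j#i#t) x)"

lemma has_grad_hess_eta: "has_grad_hess eta grad_eta hess_eta S"
  unfolding has_grad_hess_def
proof (intro ballI conjI)
  fix x :: "real^'a"
  have "((\<lambda>x. 1 - x \<bullet> x) has_derivative (\<lambda>h. 0 - (h \<bullet> x + x \<bullet> h))) (at x)"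
    by (auto intro!: derivative_eq_intros)
  moreover have "(\<lambda>h. 0 - (h \<bullet> x + x \<bullet> h)) = (\<lambda>h. grad_eta x \<bullet> h)"
    by (rule ext) (simp add: grad_eta_def inner_commute)
  ultimately show "(eta has_derivative (\<lambda>h. grad_eta x \<bullet> h)) (at x)"
    unfolding eta_def[abs_def] by simp
  have "((\<lambda>x. (-2) *\<^sub>R x) has_derivative (\<lambda>h. (-2) *\<^sub>R h)) (at x)"
    by (auto intro!: derivative_eq_intros)
  moreover have "(\<lambda>h. (-2) *\<^sub>R h) = (\<lambda>h. hess_eta x *v h)"
    by (rule ext) (simp only: hess_eta_def scaleR_matrix_vector_assoc[symmetric] matrix_vector_mul_lid)
  ultimately show "(grad_eta has_derivative (\<lambda>h. hess_eta x *v h)) (at x)"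
    unfolding grad_eta_def[abs_def] by simp
qed

lemma has_grad_hess_deriv_family:
  assumes D: "deriv_family k D" and l: "length t + 2 \<le> k"
  shows "has_grad_hess (D t) (gradD D t) (hessD D t) (ball 0 1)"
  unfolding has_grad_hess_def
proof (intro ballI conjI)
  fix x :: "real^'a" assume x: "x \<in> ball 0 1"
  have "(D t has_derivative (\<lambda>h. \<Sum>i\<in>UNIV. h$i * D (i#t) x)) (at x)"
    using deriv_family_has_derivative[OF D _ x] l by simp
  moreover have "(\<lambda>h. \<Sum>i\<in>UNIV. h$i * D (i#t) x) = (\<lambda>h. gradD D t x \<bullet> h)"
    by (rule ext) (simp add: gradD_def inner_vec_def mult.commute)
  ultimately show "(D t has_derivative (\<lambda>h. gradD D t x \<bullet> h)) (at x)" by simp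
  have "((\<lambda>x. \<chi> i. D (i#t) x) has_derivative (\<lambda>h. \<chi> i. \<Sum>j\<in>UNIV. h$j * D (j#i#t) x)) (at x)"
    by (rule has_derivative_vec_lambda) (use deriv_family_has_derivative[OF D _ x] l in auto)
  moreover have "(\<lambda>h. \<chi> i. \<Sum>j\<in>UNIV. h$j * D (j#i#t) x) = (\<lambda>h. hessD D t x *v h)"
    by (rule ext) (simp add: hessD_def matrix_vector_mult_def mult.commute)
  ultimately show "(gradD D t has_derivative (\<lambda>h. hessD D t x *v h)) (at x)"
    unfolding gradD_def[abs_def] by simp
qed

definition zeta :: "real^'n::finite \<Rightarrow> real" where "zeta x = eta x * eta x"
definition grad_zeta :: "real^'n::finite \<Rightarrow> real^'n" where "grad_zeta x = eta x *\<^sub>R grad_eta x + eta x *\<^sub>R grad_eta x"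
definition hess_zeta :: "real^'n::finite \<Rightarrow> real^'n^'n" where
  "hess_zeta x = eta x *\<^sub>R hess_eta x + eta x *\<^sub>R hess_eta x + outer (grad_eta x) (grad_eta x) + outer (grad_eta x) (grad_eta x)"

lemma zeta_half: "y \<in> ball (0::real^'n::finite) (1/2) \<Longrightarrow> 9/16 \<le> zeta y"
proof -
  assume "y \<in> ball 0 (1/2)"
  then have "3/4 \<le> eta y" by (rule eta_half)
  then have "(3/4) * (3/4) \<le> eta y * eta y" by (intro mult_mono) auto
  then show ?thesis by (simp add: zeta_def)
qed

definition grad_sq :: "(('n::finite) list \<Rightarrow> real^'n \<Rightarrow> real) \<Rightarrow> real^'n \<Rightarrow> real" where
  "grad_sq D x = (\<Sum>m\<in>UNIV. D [m] x * D [m] x)"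
definition grad_grad_sq :: "(('n::finite) list \<Rightarrow> real^'n \<Rightarrow> real) \<Rightarrow> real^'n \<Rightarrow> real^'n" where
  "grad_grad_sq D x = (\<Sum>m\<in>UNIV. D [m] x *\<^sub>R gradD D [m] x + D [m] x *\<^sub>R gradD D [m] x)"
definition hess_grad_sq :: "(('n::finite) list \<Rightarrow> real^'n \<Rightarrow> real) \<Rightarrow> real^'n \<Rightarrow> real^'n^'n" where
  "hess_grad_sq D x = (\<Sum>m\<in>UNIV. D [m] x *\<^sub>R hessD D [m] x + D [m] x *\<^sub>R hessD D [m] x
       + outer (gradD D [m] x) (gradD D [m] x) + outer (gradD D [m] x) (gradD D [m] x))"

definition shifted :: "(('n::finite) list \<Rightarrow> real^'n \<Rightarrow> real) \<Rightarrow> real \<Rightarrow> real^'n \<Rightarrow> real" where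
  "shifted D c x = D [] x - c"

definition bernstein1 :: "(('n::finite) list \<Rightarrow> real^'n \<Rightarrow> real) \<Rightarrow> real \<Rightarrow> real \<Rightarrow> real^'n \<Rightarrow> real" where
  "bernstein1 D c B x = zeta x * grad_sq D x + B * (shifted D c x * shifted D c x)"
definition grad_bernstein1 :: "(('n::finite) list \<Rightarrow> real^'n \<Rightarrow> real) \<Rightarrow> real \<Rightarrow> real \<Rightarrow> real^'n \<Rightarrow> real^'n" where
  "grad_bernstein1 D c B x = zeta x *\<^sub>R grad_grad_sq D x + grad_sq D x *\<^sub>R grad_zeta x
     + B *\<^sub>R (shifted D c x *\<^sub>R gradD D [] x + shifted D c x *\<^sub>R gradD D [] x)"
definition hess_bernstein1 :: "(('n::finite) list \<Rightarrow> real^'n \<Rightarrow> real) \<Rightarrow> real \<Rightarrow> real \<Rightarrow> real^'n \<Rightarrow> real^'n^'n" where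
  "hess_bernstein1 D c B x = zeta x *\<^sub>R hess_grad_sq D x + grad_sq D x *\<^sub>R hess_zeta x + outer (grad_grad_sq D x) (grad_zeta x) + outer (grad_zeta x) (grad_grad_sq D x)
     + B *\<^sub>R (shifted D c x *\<^sub>R hessD D [] x + shifted D c x *\<^sub>R hessD D [] x + outer (gradD D [] x) (gradD D [] x) + outer (gradD D [] x) (gradD D [] x))"

lemma has_grad_hess_zeta: "has_grad_hess zeta grad_zeta hess_zeta S"
proof -
  have "has_grad_hess (\<lambda>x. eta x * eta x) (\<lambda>x. eta x *\<^sub>R grad_eta x + eta x *\<^sub>R grad_eta x)
     (\<lambda>x. eta x *\<^sub>R hess_eta x + eta x *\<^sub>R hess_eta x + outer (grad_eta x) (grad_eta x) + outer (grad_eta x) (grad_eta x)) S"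
    by (rule has_grad_hess_mult[OF has_grad_hess_eta has_grad_hess_eta])
  then show ?thesis unfolding zeta_def[abs_def] grad_zeta_def[abs_def] hess_zeta_def[abs_def] .
qed

lemma has_grad_hess_grad_sq:
  assumes D: "deriv_family k D" and k: "3 \<le> k"
  shows "has_grad_hess (grad_sq D) (grad_grad_sq D) (hess_grad_sq D) (ball 0 1)"
proof -
  have "has_grad_hess (\<lambda>x. \<Sum>m\<in>UNIV. D [m] x * D [m] x) (\<lambda>x. \<Sum>m\<in>UNIV. D [m] x *\<^sub>R gradD D [m] x + D [m] x *\<^sub>R gradD D [m] x)
     (\<lambda>x. \<Sum>m\<in>UNIV. D [m] x *\<^sub>R hessD D [m] x + D [m] x *\<^sub>R hessD D [m] x
       + outer (gradD D [m] x) (gradD D [m] x) + outer (gradD D [m] x) (gradD D [m] x)) (ball 0 1)"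
  proof (rule has_grad_hess_sum)
    fix m :: 'a
    have l: "length [m] + 2 \<le> k" using k by simp
    show "has_grad_hess (\<lambda>x. D [m] x * D [m] x) (\<lambda>x. D [m] x *\<^sub>R gradD D [m] x + D [m] x *\<^sub>R gradD D [m] x)
       (\<lambda>x. D [m] x *\<^sub>R hessD D [m] x + D [m] x *\<^sub>R hessD D [m] x + outer (gradD D [m] x) (gradD D [m] x) + outer (gradD D [m] x) (gradD D [m] x)) (ball 0 1)"
      by (rule has_grad_hess_mult[OF has_grad_hess_deriv_family[OF D l] has_grad_hess_deriv_family[OF D l]])
  qed simp
  then show ?thesis unfolding grad_sq_def[abs_def] grad_grad_sq_def[abs_def] hess_grad_sq_def[abs_def] .
qed

lemma has_grad_hess_shifted:
  assumes D: "deriv_family k D" and k: "2 \<le> k"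
  shows "has_grad_hess (shifted D c) (gradD D []) (hessD D []) (ball 0 1)"
proof -
  have "has_grad_hess (\<lambda>x. D [] x + (- c)) (\<lambda>x. gradD D [] x + 0) (\<lambda>x. hessD D [] x + 0) (ball 0 1)"
    by (rule has_grad_hess_add[OF has_grad_hess_deriv_family[OF D] has_grad_hess_const]) (use k in simp)
  then show ?thesis unfolding shifted_def[abs_def] by simp
qed

lemma has_grad_hess_bernstein1:
  assumes D: "deriv_family k D" and k: "3 \<le> k"
  shows "has_grad_hess (bernstein1 D c B) (grad_bernstein1 D c B) (hess_bernstein1 D c B) (ball 0 1)"
proof -
  have "has_grad_hess (\<lambda>x. zeta x * grad_sq D x + B * (shifted D c x * shifted D c x))
     (\<lambda>x. (zeta x *\<^sub>R grad_grad_sq D x + grad_sq D x *\<^sub>R grad_zeta x) + B *\<^sub>R (shifted D c x *\<^sub>R gradD D [] x + shifted D c x *\<^sub>R gradD D [] x))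
     (\<lambda>x. (zeta x *\<^sub>R hess_grad_sq D x + grad_sq D x *\<^sub>R hess_zeta x + outer (grad_grad_sq D x) (grad_zeta x) + outer (grad_zeta x) (grad_grad_sq D x))
     + B *\<^sub>R (shifted D c x *\<^sub>R hessD D [] x + shifted D c x *\<^sub>R hessD D [] x + outer (gradD D [] x) (gradD D [] x) + outer (gradD D [] x) (gradD D [] x))) (ball 0 1)"
    by (rule has_grad_hess_add[OF has_grad_hess_mult[OF has_grad_hess_zeta has_grad_hess_grad_sq[OF D k]] has_grad_hess_scale[OF has_grad_hess_mult[OF has_grad_hess_shifted has_grad_hess_shifted]]]) (use k D in auto)
  then show ?thesis unfolding bernstein1_def[abs_def] grad_bernstein1_def[abs_def] hess_bernstein1_def[abs_def] by (simp add: add.assoc)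
qed

lemma grad_zeta_eq: "grad_zeta x = (2 * eta x) *\<^sub>R grad_eta x"
  by (simp add: grad_zeta_def scaleR_2[symmetric])

lemma apply_sym_hess_zeta:
  "apply_sym L (hess_zeta x) = -4 * (eta x * apply_sym L (mat 1)) + 2 * apply_sym L (outer (grad_eta x) (grad_eta x))"
  unfolding hess_zeta_def apply_sym_hess_product hess_eta_def apply_sym_scaleR by simp

lemma apply_sym_hess_grad_sq: "apply_sym L (hess_grad_sq D x) = (\<Sum>m\<in>UNIV. 2 * D [m] x * apply_sym L (hessD D [m] x) + 2 * apply_sym L (outer (gradD D [m] x) (gradD D [m] x)))"
  unfolding hess_grad_sq_def apply_sym_sum apply_sym_hess_product by (simp add: mult.assoc)

lemma apply_sym_outer_grad_zeta_grad_sq: "apply_sym L (outer (grad_zeta x) (grad_grad_sq D x)) = (\<Sum>m\<in>UNIV. 4 * (eta x * D [m] x) * apply_sym L (outer (grad_eta x) (gradD D [m] x)))"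
proof -
  note a = grad_zeta_eq[of x]
  have b: "grad_grad_sq D x = (\<Sum>m\<in>UNIV. (2 * D [m] x) *\<^sub>R gradD D [m] x)" by (simp add: grad_grad_sq_def scaleR_2[symmetric])
  show ?thesis unfolding a b outer_sum_right apply_sym_sum apply_sym_outer_scaleR by (simp add: mult_ac)
qed

lemma apply_sym_hess_bernstein1: "apply_sym L (hess_bernstein1 D c B x) = zeta x * apply_sym L (hess_grad_sq D x) + grad_sq D x * apply_sym L (hess_zeta x) + 2 * apply_sym L (outer (grad_zeta x) (grad_grad_sq D x))
    + B * (2 * shifted D c x * apply_sym L (hessD D [] x) + 2 * apply_sym L (outer (gradD D [] x) (gradD D [] x)))"
proof -
  have "apply_sym L (hess_bernstein1 D c B x) = apply_sym L (zeta x *\<^sub>R hess_grad_sq D x + grad_sq D x *\<^sub>R hess_zeta x + outer (grad_grad_sq D x) (grad_zeta x) + outer (grad_zeta x) (grad_grad_sq D x))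
     + B * apply_sym L (shifted D c x *\<^sub>R hessD D [] x + shifted D c x *\<^sub>R hessD D [] x + outer (gradD D [] x) (gradD D [] x) + outer (gradD D [] x) (gradD D [] x))"
    unfolding hess_bernstein1_def apply_sym_add apply_sym_scaleR by simp
  also have "\<dots> = zeta x * apply_sym L (hess_grad_sq D x) + grad_sq D x * apply_sym L (hess_zeta x) + 2 * apply_sym L (outer (grad_zeta x) (grad_grad_sq D x))
    + B * (2 * shifted D c x * apply_sym L (hessD D [] x) + 2 * apply_sym L (outer (gradD D [] x) (gradD D [] x)))"
    unfolding apply_sym_hess_product by simp
  finally show ?thesis .
qed

lemma apply_sym_outer_grad_eta_upper:
  assumes ell: "elliptic_blinfun lam Lam L" and lam: "0 < lam" "lam \<le> Lam" and x: "x \<in> cball (0::real^'n::finite) 1"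
  shows "apply_sym L (outer (grad_eta x) (grad_eta x)) \<le> 4 * Lam"
proof -
  have "apply_sym L (outer (grad_eta x) (grad_eta x)) \<le> Lam * (norm (grad_eta x))^2" by (rule apply_sym_outer_self_upper[OF ell])
  also have "(norm (grad_eta x))^2 = 4 * (norm x)^2" by (simp add: grad_eta_def power_mult_distrib)
  also have "Lam * (4 * (norm x)^2) \<le> Lam * 4"
    using x lam by (intro mult_left_mono) (auto simp: power_le_one)
  finally show ?thesis by simp
qed

lemma eta_mult_apply_sym_id_le:
  assumes ell: "elliptic_blinfun lam Lam L" and "0 \<le> lam" and x: "x \<in> cball 0 1"
  shows "eta x * apply_sym L (mat 1) \<le> Lam"
proof -
  have "eta x * apply_sym L (mat 1) \<le> 1 * Lam"
    using eta_bounds[OF x] apply_sym_id_upper[OF ell] apply_sym_id_lower[OF ell] \<open>0 \<le> lam\<close>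
    by (intro mult_mono) auto
  then show ?thesis by simp
qed

lemma norm_gradD_Nil_sq: "(norm (gradD D [] x))^2 = grad_sq D x"
  by (simp add: power2_norm_eq_inner inner_vec_def gradD_def grad_sq_def)

text \<open>The cross term of the Hessian of zeta |Du|^2 is absorbed by polarisation: half of it
  by the good term zeta L(D u_m, D u_m), the rest by |Du|^2 L(D eta, D eta).\<close>
lemma apply_sym_outer_grad_zeta_grad_sq_lower:
  assumes ell: "elliptic_blinfun lam Lam L" and lam: "0 \<le> lam"
  shows "- (16 * (grad_sq D x * apply_sym L (outer (grad_eta x) (grad_eta x)))
            + eta x * eta x * (\<Sum>m\<in>UNIV. apply_sym L (outer (gradD D [m] x) (gradD D [m] x))))
         \<le> 2 * apply_sym L (outer (grad_zeta x) (grad_grad_sq D x))"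
proof -
  define e where "e = eta x"
  define Qe where "Qe = apply_sym L (outer (grad_eta x) (grad_eta x))"
  define q where "q m = apply_sym L (outer (gradD D [m] x) (gradD D [m] x))" for m
  define b where "b m = apply_sym L (outer (grad_eta x) (gradD D [m] x))" for m
  have termwise: "- (16 * (D [m] x * D [m] x) * Qe + e * e * q m) \<le> 2 * (4 * (e * D [m] x) * b m)" for m
  proof -
    have "- (apply_sym L (outer ((4 * D [m] x) *\<^sub>R grad_eta x) ((4 * D [m] x) *\<^sub>R grad_eta x))
            + apply_sym L (outer (e *\<^sub>R gradD D [m] x) (e *\<^sub>R gradD D [m] x)))
          \<le> 2 * apply_sym L (outer ((4 * D [m] x) *\<^sub>R grad_eta x) (e *\<^sub>R gradD D [m] x))"
      by (rule apply_sym_outer_cross_lower[OF ell lam])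
    then show ?thesis unfolding apply_sym_outer_scaleR by (simp add: Qe_def q_def b_def mult_ac)
  qed
  have "(\<Sum>m\<in>UNIV. - (16 * (D [m] x * D [m] x) * Qe + e * e * q m)) \<le> (\<Sum>m\<in>UNIV. 2 * (4 * (e * D [m] x) * b m))"
    by (rule sum_mono) (rule termwise)
  moreover have "(\<Sum>m\<in>UNIV. - (16 * (D [m] x * D [m] x) * Qe + e * e * q m))
      = - (16 * (grad_sq D x * Qe) + e * e * (\<Sum>m\<in>UNIV. q m))"
    by (simp add: grad_sq_def sum_negf sum_subtractf sum.distrib sum_distrib_left sum_distrib_right mult_ac)
  moreover have "(\<Sum>m\<in>UNIV. 2 * (4 * (e * D [m] x) * b m)) = 2 * apply_sym L (outer (grad_zeta x) (grad_grad_sq D x))"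
    by (simp add: apply_sym_outer_grad_zeta_grad_sq e_def b_def sum_distrib_left)
  ultimately show ?thesis by (simp add: e_def Qe_def q_def)
qed

lemma apply_sym_hess_bernstein1_lower:
  fixes D :: "('n::finite) list \<Rightarrow> real^'n \<Rightarrow> real"
  assumes ell: "elliptic_blinfun lam Lam L" and lam: "0 < lam" "lam \<le> Lam" and x: "x \<in> ball 0 1"
    and Lm: "\<And>m. apply_sym L (hessD D [m] x) = 0"
    and Lu: "0 \<le> shifted D c x * apply_sym L (hessD D [] x)"
    and B: "0 \<le> B"
  shows "zeta x * (\<Sum>m\<in>UNIV. apply_sym L (outer (gradD D [m] x) (gradD D [m] x))) + (2 * B * lam - 60 * Lam) * grad_sq D x
    \<le> apply_sym L (hess_bernstein1 D c B x)"
proof -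
  define e where "e = eta x"
  define lsI where "lsI = apply_sym L (mat 1)"
  define Qe where "Qe = apply_sym L (outer (grad_eta x) (grad_eta x))"
  define sq where "sq = (\<Sum>m\<in>UNIV. apply_sym L (outer (gradD D [m] x) (gradD D [m] x)))"
  define S where "S = grad_sq D x"
  define X where "X = apply_sym L (outer (grad_zeta x) (grad_grad_sq D x))"
  define Q0 where "Q0 = apply_sym L (outer (gradD D [] x) (gradD D [] x))"
  define U0 where "U0 = shifted D c x * apply_sym L (hessD D [] x)"
  have lam0: "0 \<le> lam" using lam by simp
  have e: "0 \<le> e" using eta_bounds[of x] x by (auto simp: e_def)
  have Qe: "Qe \<le> 4 * Lam"
    using apply_sym_outer_grad_eta_upper[OF ell lam, of x] x by (auto simp: Qe_def)
  have sq: "0 \<le> sq" unfolding sq_def by (rule sum_nonneg) (use apply_sym_outer_self_nonneg[OF ell lam0] in auto)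
  have S: "0 \<le> S" unfolding S_def grad_sq_def by (rule sum_nonneg) auto
  have hS: "apply_sym L (hess_grad_sq D x) = 2 * sq"
    by (simp add: apply_sym_hess_grad_sq Lm sq_def sum_distrib_left)
  have hZ: "apply_sym L (hess_zeta x) = -4 * (e * lsI) + 2 * Qe"
    by (simp add: apply_sym_hess_zeta e_def lsI_def Qe_def)
  have "apply_sym L (hess_bernstein1 D c B x) = (e * e) * (2 * sq) + S * (-4 * (e * lsI) + 2 * Qe) + 2 * X + B * (2 * U0 + 2 * Q0)"
    unfolding apply_sym_hess_bernstein1 hS hZ by (simp add: zeta_def e_def S_def U0_def Q0_def X_def)
  then have tot: "apply_sym L (hess_bernstein1 D c B x)
      = 2 * (e * e * sq) - 4 * (S * (e * lsI)) + 2 * (S * Qe) + 2 * X + 2 * (B * U0) + 2 * (B * Q0)"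
    by (simp add: algebra_simps)
  have cross: "- (16 * (S * Qe) + e * e * sq) \<le> 2 * X"
    using apply_sym_outer_grad_zeta_grad_sq_lower[OF ell lam0] by (simp add: S_def Qe_def e_def sq_def X_def)
  have eI: "e * lsI \<le> Lam" using eta_mult_apply_sym_id_le[OF ell lam0, of x] x by (simp add: e_def lsI_def less_imp_le)
  have SeI: "S * (e * lsI) \<le> S * Lam" by (rule mult_left_mono[OF eI S])
  have SQe: "S * Qe \<le> S * (4 * Lam)" by (rule mult_left_mono[OF Qe S])
  have esq: "0 \<le> e * e * sq" using e sq by simp
  have "lam * S \<le> Q0"
    using apply_sym_outer_self_lower[OF ell, of "gradD D [] x"] by (simp add: Q0_def S_def norm_gradD_Nil_sq)
  then have BQ0: "B * (lam * S) \<le> B * Q0" by (rule mult_left_mono[OF _ B])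
  have BU0: "0 \<le> B * U0" using B Lu by (simp add: U0_def)
  have "(2 * B * lam - 60 * Lam) * S = 2 * (B * (lam * S)) - 4 * (S * Lam) - 14 * (S * (4 * Lam))"
    by (simp add: algebra_simps)
  moreover have "zeta x * sq = e * e * sq" by (simp add: zeta_def e_def)
  ultimately show ?thesis unfolding S_def[symmetric] sq_def[symmetric] tot
    using cross SeI SQe esq BQ0 BU0 by linarith
qed

lemma continuous_on_bernstein1:
  assumes D: "deriv_family k D" and k: "1 \<le> k"
  shows "continuous_on (cball 0 1) (bernstein1 D c B)"
proof -
  have c0: "continuous_on (cball 0 1) (D [])" using deriv_family_continuous[OF D] by simp
  have c1: "continuous_on (cball 0 1) (D [m])" for m using deriv_family_continuous[OF D] k by simp
  show ?thesis
    unfolding bernstein1_def[abs_def] zeta_def grad_sq_def shifted_def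
    by (intro continuous_intros continuous_on_eta c0 c1)
qed

lemma grad_sq_eq_0_at_bernstein1_max:
  fixes D :: "('n::finite) list \<Rightarrow> real^'n \<Rightarrow> real"
  assumes D: "deriv_family k D" and k: "3 \<le> k"
    and ell: "elliptic_blinfun lam Lam L" and lam: "0 < lam" "lam \<le> Lam"
    and Lm: "\<And>m. apply_sym L (hessD D [m] x1) = 0"
    and Lu: "0 \<le> shifted D c x1 * apply_sym L (hessD D [] x1)"
    and B: "B = 30 * Lam / lam + 1"
    and x1: "x1 \<in> ball 0 1" and max: "\<And>y. y \<in> cball 0 1 \<Longrightarrow> bernstein1 D c B y \<le> bernstein1 D c B x1"
  shows "grad_sq D x1 = 0"
proof -
  have B0: "0 \<le> B" using lam by (simp add: B)
  have Blam: "2 * B * lam - 60 * Lam = 2 * lam" using lam by (simp add: B field_simps)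
  have "apply_sym L (hess_bernstein1 D c B x1) \<le> 0"
  proof (rule has_grad_hess_local_max[OF has_grad_hess_bernstein1[OF D k] open_ball x1
        ball_subset_unit_cball(1)[OF x1] _ ell])
    show "\<And>y. y \<in> ball x1 (1 - norm x1) \<Longrightarrow> bernstein1 D c B y \<le> bernstein1 D c B x1"
      using max ball_subset_unit_cball(2)[OF x1] by auto
  qed (use lam in simp)
  moreover have "zeta x1 * (\<Sum>m\<in>UNIV. apply_sym L (outer (gradD D [m] x1) (gradD D [m] x1)))
      + (2 * B * lam - 60 * Lam) * grad_sq D x1 \<le> apply_sym L (hess_bernstein1 D c B x1)"
    by (rule apply_sym_hess_bernstein1_lower[OF ell lam x1 Lm Lu B0])
  moreover have "0 \<le> zeta x1 * (\<Sum>m\<in>UNIV. apply_sym L (outer (gradD D [m] x1) (gradD D [m] x1)))"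
    using apply_sym_outer_self_nonneg[OF ell] lam by (intro mult_nonneg_nonneg sum_nonneg) (auto simp: zeta_def)
  ultimately have "2 * lam * grad_sq D x1 \<le> 0" unfolding Blam by simp
  moreover have "0 \<le> grad_sq D x1" unfolding grad_sq_def by (rule sum_nonneg) auto
  ultimately show ?thesis using lam by (simp add: mult_le_0_iff)
qed

lemma bernstein1_bound:
  fixes D :: "('n::finite) list \<Rightarrow> real^'n \<Rightarrow> real"
  assumes D: "deriv_family k D" and k: "3 \<le> k"
    and ell: "\<And>x. x \<in> ball 0 1 \<Longrightarrow> elliptic_blinfun lam Lam (L x)" and lam: "0 < lam" "lam \<le> Lam"
    and Lm: "\<And>x m. x \<in> ball 0 1 \<Longrightarrow> apply_sym (L x) (hessD D [m] x) = 0"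
    and Lu: "\<And>x. x \<in> ball 0 1 \<Longrightarrow> 0 \<le> shifted D c x * apply_sym (L x) (hessD D [] x)"
    and R: "\<And>x. x \<in> cball 0 1 \<Longrightarrow> shifted D c x * shifted D c x \<le> R"
    and B: "B = 30 * Lam / lam + 1"
    and y: "y \<in> cball 0 1"
  shows "bernstein1 D c B y \<le> B * R"
proof -
  have "continuous_on (cball 0 1) (bernstein1 D c B)" by (rule continuous_on_bernstein1[OF D]) (use k in simp)
  then obtain x1 where x1: "x1 \<in> cball 0 1"
    and max: "\<And>y. y \<in> cball 0 1 \<Longrightarrow> bernstein1 D c B y \<le> bernstein1 D c B x1"
    using continuous_on_unit_cball_attains_max by blast
  have "zeta x1 * grad_sq D x1 = 0"
  proof (cases "x1 \<in> ball 0 1")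
    case True
    then show ?thesis
      using grad_sq_eq_0_at_bernstein1_max[OF D k ell[OF True] lam Lm[OF True] Lu[OF True] B True max] by simp
  qed (use eta_eq_0_sphere[OF x1] in \<open>simp add: zeta_def\<close>)
  then have "bernstein1 D c B x1 = B * (shifted D c x1 * shifted D c x1)" by (simp add: bernstein1_def)
  also have "\<dots> \<le> B * R" using R[OF x1] lam by (intro mult_left_mono) (auto simp: B)
  finally show ?thesis using max[OF y] by simp
qed

section \<open>The Bernstein function for second derivatives\<close>

definition dir2 :: "(('n::finite) list \<Rightarrow> real^'n \<Rightarrow> real) \<Rightarrow> real^'n \<Rightarrow> real^'n \<Rightarrow> real" where
  "dir2 D e x = (\<Sum>i\<in>UNIV. \<Sum>j\<in>UNIV. (e$i * e$j) * D [i,j] x)"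
definition grad_dir2 :: "(('n::finite) list \<Rightarrow> real^'n \<Rightarrow> real) \<Rightarrow> real^'n \<Rightarrow> real^'n \<Rightarrow> real^'n" where
  "grad_dir2 D e x = (\<Sum>i\<in>UNIV. \<Sum>j\<in>UNIV. (e$i * e$j) *\<^sub>R gradD D [i,j] x)"
definition hess_dir2 :: "(('n::finite) list \<Rightarrow> real^'n \<Rightarrow> real) \<Rightarrow> real^'n \<Rightarrow> real^'n \<Rightarrow> real^'n^'n" where
  "hess_dir2 D e x = (\<Sum>i\<in>UNIV. \<Sum>j\<in>UNIV. (e$i * e$j) *\<^sub>R hessD D [i,j] x)"

lemma has_grad_hess_dir2:
  assumes D: "deriv_family k D" and k: "4 \<le> k"
  shows "has_grad_hess (dir2 D e) (grad_dir2 D e) (hess_dir2 D e) (ball 0 1)"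
proof -
  have "has_grad_hess (\<lambda>x. \<Sum>i\<in>UNIV. \<Sum>j\<in>UNIV. (e$i * e$j) * D [i,j] x) (\<lambda>x. \<Sum>i\<in>UNIV. \<Sum>j\<in>UNIV. (e$i * e$j) *\<^sub>R gradD D [i,j] x)
      (\<lambda>x. \<Sum>i\<in>UNIV. \<Sum>j\<in>UNIV. (e$i * e$j) *\<^sub>R hessD D [i,j] x) (ball 0 1)"
  proof (rule has_grad_hess_sum)
    fix i show "has_grad_hess (\<lambda>x. \<Sum>j\<in>UNIV. (e$i * e$j) * D [i,j] x) (\<lambda>x. \<Sum>j\<in>UNIV. (e$i * e$j) *\<^sub>R gradD D [i,j] x)
      (\<lambda>x. \<Sum>j\<in>UNIV. (e$i * e$j) *\<^sub>R hessD D [i,j] x) (ball 0 1)"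
    proof (rule has_grad_hess_sum)
      fix j
      have l: "length [i,j] + 2 \<le> k" using k by simp
      show "has_grad_hess (\<lambda>x. (e$i * e$j) * D [i,j] x) (\<lambda>x. (e$i * e$j) *\<^sub>R gradD D [i,j] x) (\<lambda>x. (e$i * e$j) *\<^sub>R hessD D [i,j] x) (ball 0 1)"
        by (rule has_grad_hess_scale[OF has_grad_hess_deriv_family[OF D l]])
    qed simp
  qed simp
  then show ?thesis unfolding dir2_def[abs_def] grad_dir2_def[abs_def] hess_dir2_def[abs_def] .
qed

lemma hess_dir2_eq:
  assumes D: "deriv_family k D" and k: "4 \<le> k" and x: "x \<in> ball 0 1"
  shows "hess_dir2 D e x = hess_mat_dir2 D e e x"
proof -
  have "(\<Sum>i\<in>UNIV. \<Sum>j\<in>UNIV. e $ i * e $ j * D [b, a, i, j] x) = (\<Sum>k\<in>UNIV. e $ k * (\<Sum>m\<in>UNIV. e $ m * D [m, k, a, b] x))" for a b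
    using deriv_family_rev4[OF D k x] by (simp add: sum_distrib_left mult.assoc)
  then show ?thesis
    unfolding hess_dir2_def hess_mat_dir2_def hessD_def by (simp add: vec_eq_iff sum_component)
qed

lemma hess_mat_dir2_Sym:
  assumes D: "deriv_family k D" and k: "4 \<le> k" and x: "x \<in> ball 0 1"
  shows "hess_mat_dir2 D e h x \<in> Sym"
  unfolding Sym_iff_components hess_mat_dir2_def using deriv_family_swap_4_23[OF D k x] by simp

lemma dir2_eq_quadratic_form: "dir2 D e x = e \<bullet> (hess_mat D x *v e)"
  by (simp add: dir2_def hess_mat_def inner_vec_def matrix_vector_mult_def sum_distrib_left mult_ac)

lemma dir2_sq_le:
  assumes e: "norm e = 1"
  shows "(dir2 D e x)^2 \<le> (\<Sum>m\<in>UNIV. (norm (gradD D [m] x))^2)"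
proof -
  have "dir2 D e x = (\<Sum>i\<in>UNIV. \<Sum>j\<in>UNIV. e$j * (e$i * D [i,j] x))" by (simp add: dir2_def mult_ac)
  also have "\<dots> = (\<Sum>j\<in>UNIV. \<Sum>i\<in>UNIV. e$j * (e$i * D [i,j] x))" by (rule sum.swap)
  also have "\<dots> = (\<Sum>j\<in>UNIV. e$j * (e \<bullet> gradD D [j] x))" by (simp add: gradD_def inner_vec_def sum_distrib_left)
  finally have v: "dir2 D e x = (\<Sum>j\<in>UNIV. e$j * (e \<bullet> gradD D [j] x))" .
  have "(dir2 D e x)^2 \<le> (\<Sum>j\<in>UNIV. (e$j)^2) * (\<Sum>j\<in>UNIV. (e \<bullet> gradD D [j] x)^2)"
    unfolding v by (rule Cauchy_Schwarz_ineq_sum)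
  also have "(\<Sum>j\<in>UNIV. (e$j)^2) = 1"
  proof -
    have "(norm e)^2 = e \<bullet> e" by (rule power2_norm_eq_inner)
    then have "e \<bullet> e = 1" using e by simp
    then show ?thesis by (simp add: inner_vec_def power2_eq_square)
  qed
  also have "(\<Sum>j\<in>UNIV. (e \<bullet> gradD D [j] x)^2) \<le> (\<Sum>m\<in>UNIV. (norm (gradD D [m] x))^2)"
  proof (rule sum_mono)
    fix j
    have "\<bar>e \<bullet> gradD D [j] x\<bar> \<le> norm (gradD D [j] x)" using Cauchy_Schwarz_ineq2[of e "gradD D [j] x"] e by simp
    then show "(e \<bullet> gradD D [j] x)^2 \<le> (norm (gradD D [j] x))^2"
      by (metis abs_ge_zero power2_abs power_mono)
  qed
  finally show ?thesis by simp
qed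

definition cut_dir2 :: "(('n::finite) list \<Rightarrow> real^'n \<Rightarrow> real) \<Rightarrow> real^'n \<Rightarrow> real^'n \<Rightarrow> real" where
  "cut_dir2 D e x = zeta x * dir2 D e x"
definition grad_cut_dir2 :: "(('n::finite) list \<Rightarrow> real^'n \<Rightarrow> real) \<Rightarrow> real^'n \<Rightarrow> real^'n \<Rightarrow> real^'n" where
  "grad_cut_dir2 D e x = zeta x *\<^sub>R grad_dir2 D e x + dir2 D e x *\<^sub>R grad_zeta x"
definition hess_cut_dir2 :: "(('n::finite) list \<Rightarrow> real^'n \<Rightarrow> real) \<Rightarrow> real^'n \<Rightarrow> real^'n \<Rightarrow> real^'n^'n" where
  "hess_cut_dir2 D e x = zeta x *\<^sub>R hess_dir2 D e x + dir2 D e x *\<^sub>R hess_zeta x + outer (grad_dir2 D e x) (grad_zeta x) + outer (grad_zeta x) (grad_dir2 D e x)"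
definition hess_cut_dir2_sq :: "(('n::finite) list \<Rightarrow> real^'n \<Rightarrow> real) \<Rightarrow> real^'n \<Rightarrow> real^'n \<Rightarrow> real^'n^'n" where
  "hess_cut_dir2_sq D e x = cut_dir2 D e x *\<^sub>R hess_cut_dir2 D e x + cut_dir2 D e x *\<^sub>R hess_cut_dir2 D e x + outer (grad_cut_dir2 D e x) (grad_cut_dir2 D e x) + outer (grad_cut_dir2 D e x) (grad_cut_dir2 D e x)"

definition bernstein2 :: "(('n::finite) list \<Rightarrow> real^'n \<Rightarrow> real) \<Rightarrow> real^'n \<Rightarrow> real \<Rightarrow> real \<Rightarrow> real \<Rightarrow> real^'n \<Rightarrow> real" where
  "bernstein2 D e c B A x = cut_dir2 D e x * cut_dir2 D e x + A * bernstein1 D c B x"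
definition grad_bernstein2 :: "(('n::finite) list \<Rightarrow> real^'n \<Rightarrow> real) \<Rightarrow> real^'n \<Rightarrow> real \<Rightarrow> real \<Rightarrow> real \<Rightarrow> real^'n \<Rightarrow> real^'n" where
  "grad_bernstein2 D e c B A x = (cut_dir2 D e x *\<^sub>R grad_cut_dir2 D e x + cut_dir2 D e x *\<^sub>R grad_cut_dir2 D e x) + A *\<^sub>R grad_bernstein1 D c B x"
definition hess_bernstein2 :: "(('n::finite) list \<Rightarrow> real^'n \<Rightarrow> real) \<Rightarrow> real^'n \<Rightarrow> real \<Rightarrow> real \<Rightarrow> real \<Rightarrow> real^'n \<Rightarrow> real^'n^'n" where
  "hess_bernstein2 D e c B A x = hess_cut_dir2_sq D e x + A *\<^sub>R hess_bernstein1 D c B x"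

lemma has_grad_hess_cut_dir2:
  assumes D: "deriv_family k D" and k: "4 \<le> k"
  shows "has_grad_hess (cut_dir2 D e) (grad_cut_dir2 D e) (hess_cut_dir2 D e) (ball 0 1)"
  using has_grad_hess_mult[OF has_grad_hess_zeta has_grad_hess_dir2[OF D k, of e]]
  unfolding cut_dir2_def[abs_def] grad_cut_dir2_def[abs_def] hess_cut_dir2_def[abs_def] .

lemma has_grad_hess_bernstein2:
  assumes D: "deriv_family k D" and k: "4 \<le> k"
  shows "has_grad_hess (bernstein2 D e c B A) (grad_bernstein2 D e c B A) (hess_bernstein2 D e c B A) (ball 0 1)"
proof -
  have k3: "3 \<le> k" using k by simp
  show ?thesis
    using has_grad_hess_add[OF has_grad_hess_mult[OF has_grad_hess_cut_dir2[OF D k] has_grad_hess_cut_dir2[OF D k]] has_grad_hess_scale[OF has_grad_hess_bernstein1[OF D k3], of A c B]]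
    unfolding bernstein2_def[abs_def] grad_bernstein2_def[abs_def] hess_bernstein2_def[abs_def] hess_cut_dir2_sq_def[abs_def] .
qed

lemma apply_sym_hess_cut_dir2:
  "apply_sym L (hess_cut_dir2 D e x) = eta x * eta x * apply_sym L (hess_dir2 D e x)
     + dir2 D e x * apply_sym L (hess_zeta x) + 4 * eta x * apply_sym L (outer (grad_eta x) (grad_dir2 D e x))"
proof -
  have "apply_sym L (hess_cut_dir2 D e x) = zeta x * apply_sym L (hess_dir2 D e x) + dir2 D e x * apply_sym L (hess_zeta x)
      + 2 * apply_sym L (outer (grad_zeta x) (grad_dir2 D e x))"
    unfolding hess_cut_dir2_def by (rule apply_sym_hess_product)
  then show ?thesis by (simp add: zeta_def grad_zeta_eq outer_scaleR_left apply_sym_scaleR)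
qed

lemma apply_sym_outer_grad_cut_dir2:
  "apply_sym L (outer (grad_cut_dir2 D e x) (grad_cut_dir2 D e x))
     = (eta x * eta x) * (eta x * eta x) * apply_sym L (outer (grad_dir2 D e x) (grad_dir2 D e x))
       + 2 * ((eta x * eta x) * (2 * eta x * dir2 D e x) * apply_sym L (outer (grad_eta x) (grad_dir2 D e x)))
       + (2 * eta x * dir2 D e x) * (2 * eta x * dir2 D e x) * apply_sym L (outer (grad_eta x) (grad_eta x))"
proof -
  have grad: "grad_cut_dir2 D e x = (eta x * eta x) *\<^sub>R grad_dir2 D e x + (2 * eta x * dir2 D e x) *\<^sub>R grad_eta x"
    by (simp add: grad_cut_dir2_def zeta_def grad_zeta_eq)
  show ?thesis
    unfolding grad apply_sym_outer_self_add apply_sym_outer_scaleR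
    by (simp add: apply_sym_outer_commute[of L "grad_dir2 D e x" "grad_eta x"])
qed

lemma apply_sym_hess_cut_dir2_sq_lower:
  fixes D :: "('n::finite) list \<Rightarrow> real^'n \<Rightarrow> real"
  assumes ell: "elliptic_blinfun lam Lam L" and lam: "0 < lam" "lam \<le> Lam" and x: "x \<in> ball 0 1"
    and v0: "0 \<le> dir2 D e x" and Lv0: "0 \<le> apply_sym L (hess_dir2 D e x)"
  shows "-216 * (Lam * (zeta x * (dir2 D e x * dir2 D e x))) \<le> apply_sym L (hess_cut_dir2_sq D e x)"
proof -
  define ee where "ee = eta x"
  define v where "v = dir2 D e x"
  define Lv where "Lv = apply_sym L (hess_dir2 D e x)"
  define lsI where "lsI = apply_sym L (mat 1)"
  define Qe where "Qe = apply_sym L (outer (grad_eta x) (grad_eta x))"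
  define qv where "qv = apply_sym L (outer (grad_dir2 D e x) (grad_dir2 D e x))"
  define bv where "bv = apply_sym L (outer (grad_eta x) (grad_dir2 D e x))"
  have lam0: "0 \<le> lam" using lam by simp
  have Qe: "Qe \<le> 4 * Lam"
    using apply_sym_outer_grad_eta_upper[OF ell lam, of x] x by (auto simp: Qe_def)
  have qv: "0 \<le> qv" using apply_sym_outer_self_nonneg[OF ell lam0] by (simp add: qv_def)
  have hP: "apply_sym L (hess_cut_dir2 D e x) = (ee * ee) * Lv + v * (-4 * (ee * lsI) + 2 * Qe) + 2 * (2 * ee * bv)"
    by (simp add: apply_sym_hess_cut_dir2 apply_sym_hess_zeta ee_def v_def Lv_def lsI_def Qe_def bv_def)
  have hG: "apply_sym L (outer (grad_cut_dir2 D e x) (grad_cut_dir2 D e x)) = (ee * ee) * (ee * ee) * qv + 2 * ((ee * ee) * (2 * ee * v) * bv) + (2 * ee * v) * (2 * ee * v) * Qe"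
    unfolding apply_sym_outer_grad_cut_dir2 by (simp add: ee_def v_def qv_def bv_def Qe_def)
  have tot0: "apply_sym L (hess_cut_dir2_sq D e x) = 2 * ((ee * ee) * v) * apply_sym L (hess_cut_dir2 D e x) + 2 * apply_sym L (outer (grad_cut_dir2 D e x) (grad_cut_dir2 D e x))"
    unfolding hess_cut_dir2_sq_def apply_sym_hess_product by (simp add: cut_dir2_def zeta_def ee_def v_def)
  define M1 where "M1 = ee * ee * (ee * ee) * (v * Lv)"
  define M2 where "M2 = ee * ee * (ee * ee) * qv"
  define K where "K = ee * ee * (v * v)"
  define M3 where "M3 = K * (ee * lsI)"
  define M4 where "M4 = K * Qe"
  define M5 where "M5 = ee * ee * ee * (v * bv)"
  have tot: "apply_sym L (hess_cut_dir2_sq D e x) = 2 * M1 + 2 * M2 - 8 * M3 + 12 * M4 + 16 * M5"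
    unfolding tot0 hP hG M1_def M2_def M3_def M4_def M5_def K_def by (simp add: algebra_simps)
  have "- (apply_sym L (outer ((8 * ee * v) *\<^sub>R grad_eta x) ((8 * ee * v) *\<^sub>R grad_eta x))
          + apply_sym L (outer ((ee * ee) *\<^sub>R grad_dir2 D e x) ((ee * ee) *\<^sub>R grad_dir2 D e x)))
        \<le> 2 * apply_sym L (outer ((8 * ee * v) *\<^sub>R grad_eta x) ((ee * ee) *\<^sub>R grad_dir2 D e x))"
    by (rule apply_sym_outer_cross_lower[OF ell lam0])
  then have cross: "- (64 * M4 + M2) \<le> 16 * M5"
    unfolding apply_sym_outer_scaleR M4_def M2_def M5_def K_def by (simp add: Qe_def qv_def bv_def algebra_simps)
  have K0: "0 \<le> K" by (simp add: K_def)
  have M1: "0 \<le> M1" using v0 Lv0 by (simp add: M1_def v_def Lv_def)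
  have M2: "0 \<le> M2" using qv by (simp add: M2_def)
  have eI: "ee * lsI \<le> Lam" using eta_mult_apply_sym_id_le[OF ell lam0, of x] x by (simp add: ee_def lsI_def less_imp_le)
  have M3: "M3 \<le> K * Lam" unfolding M3_def by (rule mult_left_mono[OF eI K0])
  have M4: "M4 \<le> K * (4 * Lam)" unfolding M4_def by (rule mult_left_mono[OF Qe K0])
  have "zeta x * (dir2 D e x * dir2 D e x) = K" by (simp add: zeta_def K_def ee_def v_def)
  then show ?thesis unfolding tot using cross M1 M2 M3 M4 by (simp add: algebra_simps)
qed

lemma apply_sym_hess_bernstein1_ge_dir2_sq:
  fixes D :: "('n::finite) list \<Rightarrow> real^'n \<Rightarrow> real"
  assumes ell: "elliptic_blinfun lam Lam L" and lam: "0 < lam" "lam \<le> Lam" and x: "x \<in> ball 0 1"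
    and e: "norm e = 1"
    and Lm: "\<And>m. apply_sym L (hessD D [m] x) = 0"
    and Lu: "0 \<le> shifted D c x * apply_sym L (hessD D [] x)"
    and B: "B = 30 * Lam / lam + 1"
  shows "lam * (zeta x * (dir2 D e x * dir2 D e x)) \<le> apply_sym L (hess_bernstein1 D c B x)"
proof -
  define sqQ where "sqQ = (\<Sum>m\<in>UNIV. apply_sym L (outer (gradD D [m] x) (gradD D [m] x)))"
  have "lam * (dir2 D e x)^2 \<le> lam * (\<Sum>m\<in>UNIV. (norm (gradD D [m] x))^2)"
    using dir2_sq_le[OF e] lam by (intro mult_left_mono) auto
  also have "\<dots> = (\<Sum>m\<in>UNIV. lam * (norm (gradD D [m] x))^2)" by (simp add: sum_distrib_left)
  also have "\<dots> \<le> sqQ" unfolding sqQ_def by (rule sum_mono) (rule apply_sym_outer_self_lower[OF ell])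
  finally have "zeta x * (lam * (dir2 D e x * dir2 D e x)) \<le> zeta x * sqQ"
    by (intro mult_left_mono) (auto simp: power2_eq_square zeta_def)
  moreover have "zeta x * sqQ + (2 * B * lam - 60 * Lam) * grad_sq D x \<le> apply_sym L (hess_bernstein1 D c B x)"
    unfolding sqQ_def by (rule apply_sym_hess_bernstein1_lower[OF ell lam x Lm Lu]) (use lam in \<open>simp add: B\<close>)
  moreover have "2 * B * lam - 60 * Lam = 2 * lam" using lam by (simp add: B field_simps)
  moreover have "0 \<le> 2 * lam * grad_sq D x" using lam by (simp add: grad_sq_def sum_nonneg)
  ultimately show ?thesis by (simp add: mult_ac)
qed

lemma apply_sym_hess_bernstein2_lower:
  fixes D :: "('n::finite) list \<Rightarrow> real^'n \<Rightarrow> real"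
  assumes ell: "elliptic_blinfun lam Lam L" and lam: "0 < lam" "lam \<le> Lam" and x: "x \<in> ball 0 1"
    and e: "norm e = 1" and v0: "0 \<le> dir2 D e x" and Lv0: "0 \<le> apply_sym L (hess_dir2 D e x)"
    and Lm: "\<And>m. apply_sym L (hessD D [m] x) = 0"
    and Lu: "0 \<le> shifted D c x * apply_sym L (hessD D [] x)"
    and B: "B = 30 * Lam / lam + 1" and A: "A = 216 * Lam / lam + 1"
  shows "lam * (zeta x * (dir2 D e x * dir2 D e x)) \<le> apply_sym L (hess_bernstein2 D e c B A x)"
proof -
  define Z where "Z = zeta x * (dir2 D e x * dir2 D e x)"
  have "A * (lam * Z) \<le> A * apply_sym L (hess_bernstein1 D c B x)"
    using apply_sym_hess_bernstein1_ge_dir2_sq[OF ell lam x e Lm Lu B] lam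
    by (intro mult_left_mono) (auto simp: A Z_def)
  moreover have "-216 * (Lam * Z) \<le> apply_sym L (hess_cut_dir2_sq D e x)"
    unfolding Z_def by (rule apply_sym_hess_cut_dir2_sq_lower[OF ell lam x v0 Lv0])
  moreover have "apply_sym L (hess_bernstein2 D e c B A x) = apply_sym L (hess_cut_dir2_sq D e x) + A * apply_sym L (hess_bernstein1 D c B x)"
    by (simp add: hess_bernstein2_def apply_sym_add apply_sym_scaleR)
  moreover have "A * (lam * Z) - 216 * (Lam * Z) = lam * Z"
  proof -
    have "A * lam - 216 * Lam = lam" using lam by (simp add: A field_simps)
    then show ?thesis by (metis left_diff_distrib mult.assoc)
  qed
  ultimately show ?thesis unfolding Z_def by linarith
qed

text \<open>Only the positive part of u_ee is cut off and squared: the result is continuous on the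
  closed ball, and near any point where u_ee > 0 it agrees with the smooth bernstein2.\<close>
definition bernstein2_pos :: "(('n::finite) list \<Rightarrow> real^'n \<Rightarrow> real) \<Rightarrow> real^'n \<Rightarrow> real \<Rightarrow> real \<Rightarrow> real \<Rightarrow> real^'n \<Rightarrow> real" where
  "bernstein2_pos D e c B A x = (zeta x * max 0 (dir2 D e x)) * (zeta x * max 0 (dir2 D e x)) + A * bernstein1 D c B x"

lemma continuous_on_dir2:
  assumes D: "deriv_family k D" and k: "2 \<le> k"
  shows "continuous_on (cball 0 1) (dir2 D e)"
proof -
  have c: "continuous_on (cball 0 1) (D [i,j])" for i j using deriv_family_continuous[OF D] k by simp
  show ?thesis unfolding dir2_def[abs_def] by (intro continuous_intros c)
qed

lemma continuous_on_bernstein2_pos: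
  assumes D: "deriv_family k D" and k: "2 \<le> k"
  shows "continuous_on (cball 0 1) (bernstein2_pos D e c B A)"
proof -
  have cv: "continuous_on (cball 0 1) (dir2 D e)" by (rule continuous_on_dir2[OF D k])
  have cw: "continuous_on (cball 0 1) (bernstein1 D c B)" by (rule continuous_on_bernstein1[OF D]) (use k in simp)
  show ?thesis unfolding bernstein2_pos_def[abs_def] zeta_def
    by (intro continuous_intros continuous_on_eta cv cw)
qed

lemma bernstein2_eq_pos_near:
  assumes D: "deriv_family k D" and k: "2 \<le> k"
    and x1: "x1 \<in> ball 0 1" and pos: "0 < dir2 D e x1"
    and max: "\<And>y. y \<in> cball 0 1 \<Longrightarrow> bernstein2_pos D e c B A y \<le> bernstein2_pos D e c B A x1"
  obtains \<delta> where "0 < \<delta>" "\<And>y. y \<in> ball x1 \<delta> \<Longrightarrow> bernstein2 D e c B A y \<le> bernstein2 D e c B A x1"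
proof -
  have "continuous_on (ball 0 1) (dir2 D e)"
    by (rule continuous_on_subset[OF continuous_on_dir2[OF D k] ball_subset_cball])
  then have "isCont (dir2 D e) x1" using x1 by (simp add: continuous_on_eq_continuous_at)
  then obtain \<rho> where "\<rho> > 0" and \<rho>: "\<And>y. dist y x1 < \<rho> \<Longrightarrow> dist (dir2 D e y) (dir2 D e x1) < dir2 D e x1"
    using pos unfolding continuous_at_eps_delta by blast
  define \<delta> where "\<delta> = min \<rho> (1 - norm x1)"
  have "0 < \<delta>" using \<open>\<rho> > 0\<close> ball_subset_unit_cball(1)[OF x1] by (simp add: \<delta>_def)
  moreover have "bernstein2 D e c B A y \<le> bernstein2 D e c B A x1" if "y \<in> ball x1 \<delta>" for y
  proof -
    have y: "y \<in> cball 0 1" using that ball_subset_unit_cball(2)[OF x1] by (auto simp: \<delta>_def)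
    have "dist y x1 < \<rho>" using that by (simp add: \<delta>_def dist_commute)
    then have "0 < dir2 D e y" using \<rho> by (force simp: dist_real_def)
    then have "bernstein2 D e c B A y = bernstein2_pos D e c B A y"
      by (simp add: bernstein2_def bernstein2_pos_def cut_dir2_def)
    also have "\<dots> \<le> bernstein2_pos D e c B A x1" by (rule max[OF y])
    also have "\<dots> = bernstein2 D e c B A x1"
      using pos by (simp add: bernstein2_def bernstein2_pos_def cut_dir2_def)
    finally show ?thesis .
  qed
  ultimately show ?thesis using that by blast
qed

lemma dir2_nonpos_at_bernstein2_pos_max:
  fixes D :: "('n::finite) list \<Rightarrow> real^'n \<Rightarrow> real"
  assumes D: "deriv_family k D" and k: "4 \<le> k"
    and ell: "elliptic_blinfun lam Lam L" and lam: "0 < lam" "lam \<le> Lam"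
    and Lm: "\<And>m. apply_sym L (hessD D [m] x1) = 0"
    and Lu: "0 \<le> shifted D c x1 * apply_sym L (hessD D [] x1)"
    and Lv: "0 \<le> apply_sym L (hess_dir2 D e x1)"
    and e: "norm e = 1" and B: "B = 30 * Lam / lam + 1" and A: "A = 216 * Lam / lam + 1"
    and x1: "x1 \<in> ball 0 1"
    and max: "\<And>y. y \<in> cball 0 1 \<Longrightarrow> bernstein2_pos D e c B A y \<le> bernstein2_pos D e c B A x1"
  shows "dir2 D e x1 \<le> 0"
proof (rule ccontr)
  assume "\<not> dir2 D e x1 \<le> 0"
  then have pos: "0 < dir2 D e x1" by simp
  obtain \<delta> where "0 < \<delta>" and near: "\<And>y. y \<in> ball x1 \<delta> \<Longrightarrow> bernstein2 D e c B A y \<le> bernstein2 D e c B A x1"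
    using bernstein2_eq_pos_near[OF D _ x1 pos max] k by auto
  have "apply_sym L (hess_bernstein2 D e c B A x1) \<le> 0"
    using has_grad_hess_local_max[OF has_grad_hess_bernstein2[OF D k] open_ball x1 \<open>0 < \<delta>\<close> near ell] lam
    by simp
  moreover have "lam * (zeta x1 * (dir2 D e x1 * dir2 D e x1)) \<le> apply_sym L (hess_bernstein2 D e c B A x1)"
    by (rule apply_sym_hess_bernstein2_lower[OF ell lam x1 e _ Lv Lm Lu B A]) (use pos in simp)
  moreover have "0 < lam * (zeta x1 * (dir2 D e x1 * dir2 D e x1))"
    using lam pos eta_pos[OF x1] by (simp add: zeta_def)
  ultimately show False by simp
qed

lemma bernstein2_pos_bound:
  fixes D :: "('n::finite) list \<Rightarrow> real^'n \<Rightarrow> real"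
  assumes D: "deriv_family k D" and k: "4 \<le> k"
    and ell: "\<And>x. x \<in> ball 0 1 \<Longrightarrow> elliptic_blinfun lam Lam (L x)" and lam: "0 < lam" "lam \<le> Lam"
    and Lm: "\<And>x m. x \<in> ball 0 1 \<Longrightarrow> apply_sym (L x) (hessD D [m] x) = 0"
    and Lu: "\<And>x. x \<in> ball 0 1 \<Longrightarrow> 0 \<le> shifted D c x * apply_sym (L x) (hessD D [] x)"
    and Lv: "\<And>x. x \<in> ball 0 1 \<Longrightarrow> 0 \<le> apply_sym (L x) (hess_dir2 D e x)"
    and R: "\<And>x. x \<in> cball 0 1 \<Longrightarrow> shifted D c x * shifted D c x \<le> R"
    and e: "norm e = 1"
    and B: "B = 30 * Lam / lam + 1" and A: "A = 216 * Lam / lam + 1"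
    and y: "y \<in> cball 0 1"
  shows "bernstein2_pos D e c B A y \<le> A * (B * R)"
proof -
  have "continuous_on (cball 0 1) (bernstein2_pos D e c B A)"
    by (rule continuous_on_bernstein2_pos[OF D]) (use k in simp)
  then obtain x1 where x1: "x1 \<in> cball 0 1"
    and max: "\<And>y. y \<in> cball 0 1 \<Longrightarrow> bernstein2_pos D e c B A y \<le> bernstein2_pos D e c B A x1"
    using continuous_on_unit_cball_attains_max by blast
  have "zeta x1 * max 0 (dir2 D e x1) = 0"
  proof (cases "x1 \<in> ball 0 1")
    case True
    then show ?thesis
      using dir2_nonpos_at_bernstein2_pos_max[OF D k ell[OF True] lam Lm[OF True] Lu[OF True] Lv[OF True] e B A True max]
      by simp
  qed (use eta_eq_0_sphere[OF x1] in \<open>simp add: zeta_def\<close>)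
  then have "bernstein2_pos D e c B A x1 = A * bernstein1 D c B x1" by (simp add: bernstein2_pos_def)
  also have "\<dots> \<le> A * (B * R)"
    using bernstein1_bound[OF D _ ell lam Lm Lu R B x1] k lam by (intro mult_left_mono) (auto simp: A)
  finally show ?thesis using max[OF y] by simp
qed

section \<open>Interior estimates\<close>

context
  fixes lam Lam :: real and F :: "('n::finite) mat \<Rightarrow> real" and F' :: "'n mat \<Rightarrow> ('n mat \<Rightarrow>\<^sub>L real)"
    and u :: "real^'n \<Rightarrow> real" and D :: "'n list \<Rightarrow> real^'n \<Rightarrow> real" and k :: nat
  assumes qc: "quasiconcave F" and ue: "unif_elliptic lam Lam F" and F0: "F 0 = 0"
    and DF: "\<forall>M\<in>Sym. (F has_derivative blinfun_apply (F' M)) (at M within Sym)"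
    and D: "deriv_family k D" and k: "3 \<le> k" and u: "\<forall>y\<in>cball 0 1. D [] y = u y"
    and eq: "\<forall>x\<in>ball 0 1. F (hess u x) = 0"
begin

lemma lam_pos: "0 < lam" and lam_le_Lam: "lam \<le> Lam"
  using ue by (auto simp: unif_elliptic_def)

lemma continuous_on_solution: "continuous_on (cball 0 1) u"
  by (rule continuous_on_eq[OF deriv_family_continuous[OF D, of "[]"]]) (use u in auto)

lemma linearization_elliptic: "x \<in> ball 0 1 \<Longrightarrow> elliptic_blinfun lam Lam (F' (hess_mat D x))"
  using unif_elliptic_derivative[OF ue DF hess_mat_Sym[OF D]] k by simp

lemma linearization_hessD_eq_0:
  assumes x: "x \<in> ball 0 1"
  shows "apply_sym (F' (hess_mat D x)) (hessD D [m] x) = 0"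
proof -
  have "hessD D [m] x = hess_mat_dir D (axis m 1) x"
    unfolding hessD_def hess_mat_dir_def using deriv_family_rev3[OF D k x] by (simp add: vec_eq_iff sum_axis_mult)
  then show ?thesis
    using differentiated_equation_eq_0[OF D k u eq DF x] apply_sym_Sym[OF hess_mat_dir_Sym[OF D k x]] by simp
qed

text \<open>First-order quasiconcavity between D^2 u and 0 (both level 0) gives L(D^2 u) <= 0,
  while u - sup u <= 0.\<close>
lemma linearization_shifted_nonneg:
  assumes x: "x \<in> ball 0 1"
  shows "0 \<le> shifted D (SUP y\<in>ball 0 1. u y) x * apply_sym (F' (hess_mat D x)) (hessD D [] x)"
proof -
  have k2: "2 \<le> k" using k by simp
  have hessD: "hessD D [] x = hess_mat D x"
    unfolding hessD_def hess_mat_def using deriv_family_swap_2_01[OF D k2 x] by (simp add: vec_eq_iff)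
  have "F (hess u x) = 0" using eq x by blast
  then have "F (hess_mat D x) \<le> F 0" using hess_deriv_family[OF D k2 u x] F0 by simp
  then have "0 \<le> blinfun_apply (F' (hess_mat D x)) (0 - hess_mat D x)"
    by (rule quasiconcave_first_order[OF qc DF hess_mat_Sym[OF D k2 x] Sym_zero])
  then have "apply_sym (F' (hess_mat D x)) (hessD D [] x) \<le> 0"
    unfolding hessD apply_sym_Sym[OF hess_mat_Sym[OF D k2 x]] by (simp add: blinfun.bilinear_simps)
  moreover have "u x \<le> (SUP y\<in>ball 0 1. u y)"
    by (rule SUP_INF_unit_ball_bounds(1)[OF continuous_on_solution]) (use x in auto)
  then have "shifted D (SUP y\<in>ball 0 1. u y) x \<le> 0" using u x by (simp add: shifted_def)
  ultimately show ?thesis by (simp add: mult_nonpos_nonpos)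
qed

lemma shifted_sq_le_osc_sq:
  assumes x: "x \<in> cball 0 1"
  shows "shifted D (SUP y\<in>ball 0 1. u y) x * shifted D (SUP y\<in>ball 0 1. u y) x \<le> (osc u (ball 0 1))^2"
proof -
  have "\<bar>shifted D (SUP y\<in>ball 0 1. u y) x\<bar> \<le> osc u (ball 0 1)"
    using SUP_INF_unit_ball_bounds[OF continuous_on_solution x] u x by (simp add: shifted_def osc_def)
  then show ?thesis
    by (metis abs_ge_zero abs_mult_self_eq power2_eq_square power_mono)
qed

lemma gradient_bound:
  assumes x: "x \<in> ball 0 (1/2)"
  shows "norm (grad u x) \<le> 4/3 * sqrt (30 * Lam / lam + 1) * osc u (ball 0 1)"
proof -
  define B where "B = 30 * Lam / lam + 1"
  define os where "os = osc u (ball 0 1)"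
  have B0: "0 \<le> B" using lam_pos lam_le_Lam by (simp add: B_def)
  have os0: "0 \<le> os" unfolding os_def by (rule osc_nonneg[OF continuous_on_solution])
  have "bernstein1 D (SUP y\<in>ball 0 1. u y) B x \<le> B * os^2"
    unfolding os_def
    by (rule bernstein1_bound[OF D k linearization_elliptic lam_pos lam_le_Lam linearization_hessD_eq_0
          linearization_shifted_nonneg shifted_sq_le_osc_sq B_def]) (use x in auto)
  moreover have "zeta x * grad_sq D x \<le> bernstein1 D (SUP y\<in>ball 0 1. u y) B x"
    using B0 by (simp add: bernstein1_def)
  moreover have "9/16 * grad_sq D x \<le> zeta x * grad_sq D x"
    by (rule mult_right_mono[OF zeta_half[OF x]]) (simp add: grad_sq_def sum_nonneg)
  ultimately have "(norm (grad u x))^2 \<le> 16/9 * (B * os^2)"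
    using grad_deriv_family[OF D _ u] norm_gradD_Nil_sq[of D x] k x by (simp add: gradD_def)
  also have "\<dots> = (4/3)^2 * (sqrt B)^2 * os^2" using B0 by (simp add: power_divide)
  also have "\<dots> = (4/3 * sqrt B * os)^2" by (simp only: power_mult_distrib)
  finally have "(norm (grad u x))^2 \<le> (4/3 * sqrt B * os)^2" .
  then show ?thesis
    unfolding B_def[symmetric] os_def[symmetric] by (rule power2_le_imp_le) (use B0 os0 in simp)
qed

context
  fixes F'' :: "'n mat \<Rightarrow> ('n mat \<Rightarrow>\<^sub>L ('n mat \<Rightarrow>\<^sub>L real))"
  assumes DF2: "\<forall>M\<in>Sym. (F' has_derivative blinfun_apply (F'' M)) (at M within Sym)"
    and k4: "4 \<le> k"
begin

text \<open>Second-order quasiconcavity after differentiating the equation twice in direction e.\<close>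
lemma linearization_hess_dir2_nonneg:
  assumes x: "x \<in> ball 0 1"
  shows "0 \<le> apply_sym (F' (hess_mat D x)) (hess_dir2 D e x)"
  using twice_differentiated_equation_nonneg[OF D k4 u eq qc DF DF2 x, of e] hess_dir2_eq[OF D k4 x, of e]
    apply_sym_Sym[OF hess_mat_dir2_Sym[OF D k4 x]]
  by simp

lemma dir2_le:
  assumes x: "x \<in> ball 0 (1/2)" and e: "norm e = 1"
  shows "dir2 D e x \<le> 16/9 * sqrt ((216 * Lam / lam + 1) * (30 * Lam / lam + 1)) * osc u (ball 0 1)"
proof -
  define A where "A = 216 * Lam / lam + 1"
  define B where "B = 30 * Lam / lam + 1"
  define os where "os = osc u (ball 0 1)"
  define m where "m = max 0 (dir2 D e x)"
  have A0: "0 \<le> A" and B0: "0 \<le> B" using lam_pos lam_le_Lam by (auto simp: A_def B_def)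
  have os0: "0 \<le> os" unfolding os_def by (rule osc_nonneg[OF continuous_on_solution])
  have "bernstein2_pos D e (SUP y\<in>ball 0 1. u y) B A x \<le> A * (B * os^2)"
    unfolding os_def
    by (rule bernstein2_pos_bound[OF D k4 linearization_elliptic lam_pos lam_le_Lam linearization_hessD_eq_0
          linearization_shifted_nonneg linearization_hess_dir2_nonneg shifted_sq_le_osc_sq e B_def A_def])
       (use x in auto)
  moreover have "0 \<le> A * bernstein1 D (SUP y\<in>ball 0 1. u y) B x"
    using A0 B0 by (simp add: bernstein1_def zeta_def grad_sq_def sum_nonneg)
  ultimately have "(zeta x * m)^2 \<le> (sqrt (A * B) * os)^2"
    using A0 B0 by (simp add: bernstein2_pos_def m_def power2_eq_square power_mult_distrib mult_ac)
  then have "zeta x * m \<le> sqrt (A * B) * os"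
    by (rule power2_le_imp_le) (use A0 B0 os0 in simp)
  moreover have "9/16 * m \<le> zeta x * m" by (rule mult_right_mono[OF zeta_half[OF x]]) (simp add: m_def)
  ultimately have "m \<le> 16/9 * sqrt (A * B) * os" by simp
  then show ?thesis by (simp add: m_def A_def B_def os_def)
qed

lemma hessian_bound:
  assumes x: "x \<in> ball 0 (1/2)"
  shows "opnorm (hess u x) \<le> (1 + Lam / lam) * (16/9 * sqrt ((216 * Lam / lam + 1) * (30 * Lam / lam + 1))) * osc u (ball 0 1)"
proof -
  define \<mu> where "\<mu> = 16/9 * sqrt ((216 * Lam / lam + 1) * (30 * Lam / lam + 1)) * osc u (ball 0 1)"
  have xb: "x \<in> ball 0 1" using x by auto
  have hess: "hess u x = hess_mat D x" using hess_deriv_family[OF D _ u xb] k by simp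
  have "0 \<le> \<mu>" using lam_pos lam_le_Lam osc_nonneg[OF continuous_on_solution] by (simp add: \<mu>_def)
  moreover have "\<xi> \<bullet> (hess_mat D x *v \<xi>) \<le> \<mu> * (\<xi> \<bullet> \<xi>)" for \<xi>
  proof (cases "\<xi> = 0")
    case False
    define e where "e = (1 / norm \<xi>) *\<^sub>R \<xi>"
    have "norm e = 1" using False by (simp add: e_def)
    then have "dir2 D e x \<le> \<mu>" unfolding \<mu>_def by (rule dir2_le[OF x])
    moreover have "dir2 D e x = (1 / norm \<xi>) * (1 / norm \<xi>) * (\<xi> \<bullet> (hess_mat D x *v \<xi>))"
      by (simp add: dir2_eq_quadratic_form e_def matrix_vector_mult_scaleR)
    ultimately have "(1 / norm \<xi>) * (1 / norm \<xi>) * (\<xi> \<bullet> (hess_mat D x *v \<xi>)) \<le> \<mu>" by (simp only:)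
    then have "\<xi> \<bullet> (hess_mat D x *v \<xi>) \<le> \<mu> * (norm \<xi> * norm \<xi>)" using False by (simp add: field_simps)
    then show ?thesis by (simp add: power2_norm_eq_inner[symmetric] power2_eq_square)
  qed simp
  moreover have "F (hess_mat D x) = 0" using bspec[OF eq xb] hess by simp
  ultimately have "opnorm (hess_mat D x) \<le> (1 + Lam / lam) * \<mu>"
    using opnorm_le_of_quadratic_form_le[OF ue F0 hess_mat_Sym[OF D _ xb]] k by simp
  then show ?thesis by (simp add: hess \<mu>_def mult.assoc)
qed

end

end

lemma gradient_estimate:
  fixes F :: "('n::finite) mat \<Rightarrow> real" and u :: "real^'n \<Rightarrow> real"
  assumes "quasiconcave F" "unif_elliptic lam Lam F" "C1_Sym F" "F 0 = 0"
    and "Ck_on 3 (cball 0 1) u" "\<forall>x\<in>ball 0 1. F (hess u x) = 0"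
    and "x \<in> ball 0 (1/2)"
  shows "norm (grad u x) \<le> 4/3 * sqrt (30 * Lam / lam + 1) * osc u (ball 0 1)"
proof -
  obtain F' where DF: "\<forall>M\<in>Sym. (F has_derivative blinfun_apply (F' M)) (at M within Sym)"
    using \<open>C1_Sym F\<close> unfolding C1_Sym_def by blast
  obtain D where D: "deriv_family 3 D" and u: "\<forall>x\<in>cball 0 1. D [] x = u x"
    using Ck_on_deriv_family[OF \<open>Ck_on 3 (cball 0 1) u\<close>] by blast
  show ?thesis by (rule gradient_bound[OF assms(1,2,4) DF D _ u assms(6,7)]) simp
qed

lemma hessian_estimate:
  fixes F :: "('n::finite) mat \<Rightarrow> real" and u :: "real^'n \<Rightarrow> real"
  assumes "quasiconcave F" "unif_elliptic lam Lam F" "C2_Sym F" "F 0 = 0"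
    and "Ck_on 4 (cball 0 1) u" "\<forall>x\<in>ball 0 1. F (hess u x) = 0"
    and "x \<in> ball 0 (1/2)"
  shows "opnorm (hess u x) \<le> (1 + Lam / lam) * (16/9 * sqrt ((216 * Lam / lam + 1) * (30 * Lam / lam + 1))) * osc u (ball 0 1)"
proof -
  obtain F' F'' where DF: "\<forall>M\<in>Sym. (F has_derivative blinfun_apply (F' M)) (at M within Sym)"
    and DF2: "\<forall>M\<in>Sym. (F' has_derivative blinfun_apply (F'' M)) (at M within Sym)"
    using \<open>C2_Sym F\<close> unfolding C2_Sym_def by blast
  obtain D where D: "deriv_family 4 D" and u: "\<forall>x\<in>cball 0 1. D [] x = u x"
    using Ck_on_deriv_family[OF \<open>Ck_on 4 (cball 0 1) u\<close>] by blast
  show ?thesis by (rule hessian_bound[OF assms(1,2,4) DF D _ u assms(6) DF2 _ assms(7)]) simp_all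
qed

lemma Ck_on_osc_nonneg:
  fixes u :: "real^'n::finite \<Rightarrow> real"
  assumes "Ck_on k (cball 0 1) u"
  shows "0 \<le> osc u (ball 0 1)"
proof -
  obtain D where D: "deriv_family k D" and u: "\<forall>x\<in>cball 0 1. D [] x = u x"
    using Ck_on_deriv_family[OF assms] by blast
  have "continuous_on (cball 0 1) u"
    by (rule continuous_on_eq[OF deriv_family_continuous[OF D, of "[]"]]) (use u in auto)
  then show ?thesis by (rule osc_nonneg)
qed

theorem theorem3p5:
  fixes lam Lam :: real
  assumes "0 < lam" and "lam \<le> Lam"
  shows "\<exists>C::real.
    (\<forall>(F :: ('n::finite) mat \<Rightarrow> real) (u :: real^'n \<Rightarrow> real).
        quasiconcave F \<and> unif_elliptic lam Lam F \<and> C1_Sym F \<and> F 0 = 0 \<and>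
        Ck_on 3 (cball 0 1) u \<and> (\<forall>x\<in>ball 0 1. F (hess u x) = 0)
        \<longrightarrow> (\<forall>x\<in>ball 0 (1/2). norm (grad u x) \<le> C * osc u (ball 0 1))) \<and>
    (\<forall>(F :: 'n mat \<Rightarrow> real) (u :: real^'n \<Rightarrow> real).
        quasiconcave F \<and> unif_elliptic lam Lam F \<and> C1_Sym F \<and> C2_Sym F \<and> F 0 = 0 \<and>
        Ck_on 4 (cball 0 1) u \<and> (\<forall>x\<in>ball 0 1. F (hess u x) = 0)
        \<longrightarrow> (\<forall>x\<in>ball 0 (1/2). opnorm (hess u x) \<le> C * osc u (ball 0 1)))"
proof -
  define C\<^sub>1 where "C\<^sub>1 = 4/3 * sqrt (30 * Lam / lam + 1)"
  define C\<^sub>2 where "C\<^sub>2 = (1 + Lam / lam) * (16/9 * sqrt ((216 * Lam / lam + 1) * (30 * Lam / lam + 1)))"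
  show ?thesis
  proof (intro exI[of _ "max C\<^sub>1 C\<^sub>2"] conjI allI impI ballI)
    fix F :: "'n mat \<Rightarrow> real" and u :: "real^'n \<Rightarrow> real" and x :: "real^'n"
    assume h: "quasiconcave F \<and> unif_elliptic lam Lam F \<and> C1_Sym F \<and> F 0 = 0 \<and>
        Ck_on 3 (cball 0 1) u \<and> (\<forall>x\<in>ball 0 1. F (hess u x) = 0)" and x: "x \<in> ball 0 (1/2)"
    have "norm (grad u x) \<le> C\<^sub>1 * osc u (ball 0 1)"
      unfolding C\<^sub>1_def by (rule gradient_estimate[where F=F]) (use h x in auto)
    also have "\<dots> \<le> max C\<^sub>1 C\<^sub>2 * osc u (ball 0 1)"
      by (rule mult_right_mono) (use Ck_on_osc_nonneg h in auto)
    finally show "norm (grad u x) \<le> max C\<^sub>1 C\<^sub>2 * osc u (ball 0 1)" .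
  next
    fix F :: "'n mat \<Rightarrow> real" and u :: "real^'n \<Rightarrow> real" and x :: "real^'n"
    assume h: "quasiconcave F \<and> unif_elliptic lam Lam F \<and> C1_Sym F \<and> C2_Sym F \<and> F 0 = 0 \<and>
        Ck_on 4 (cball 0 1) u \<and> (\<forall>x\<in>ball 0 1. F (hess u x) = 0)" and x: "x \<in> ball 0 (1/2)"
    have "opnorm (hess u x) \<le> C\<^sub>2 * osc u (ball 0 1)"
      unfolding C\<^sub>2_def by (rule hessian_estimate[where F=F]) (use h x in auto)
    also have "\<dots> \<le> max C\<^sub>1 C\<^sub>2 * osc u (ball 0 1)"
      by (rule mult_right_mono) (use Ck_on_osc_nonneg h in auto)
    finally show "opnorm (hess u x) \<le> max C\<^sub>1 C\<^sub>2 * osc u (ball 0 1)" .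
  qed
qed

end
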